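(* Let $R$ be a compact noetherian local ring with maximal ideal $\mathfrak{m}_R$, $\sigma$ a ring automorphism of $R$ with $\sigma(\mathfrak{m}_R)=\mathfrak{m}_R$, and $\delta$ a $\sigma$-derivation with $\delta(R)\subseteq\mathfrak{m}_R$, $\delta(\mathfrak{m}_R)\subseteq\mathfrak{m}_R^2$. Let $A=R[[Y;\sigma,\delta]]$ and $B=R[Y;\sigma,\delta]\subseteq A$. Let $M$ be a finitely generated $A$-module which is finitely generated as an $R$-module. Then every $B$-submodule $N\subseteq M$ is an $A$-submodule, and every $B$-module quotient of $M$ is an $A$-module quotient.
   Context: A $\sigma$-derivation is an additive map with $\delta(rs)=\delta(r)s+\sigma(r)\delta(s)$. $R[[Y;\sigma,\delta]]$ is the skew power series ring of formal series $\sum r_nY^n$ with multiplication determined by $Yr=\sigma(r)Y+\delta(r)$, and $R[Y;\sigma,\delta]$ the subring of polynomials. *)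

theory Defs
  imports Complex_Main
begin

definition is_unit :: "'r::ring_1 \<Rightarrow> bool" where
  "is_unit x \<longleftrightarrow> (\<exists>y. x * y = 1 \<and> y * x = 1)"

text \<open>Local ring: the non-units form an additive subgroup (equivalently a
  unique maximal left/right/two-sided ideal); the maximal ideal is the set of non-units.\<close>
definition local_ring :: "'r::ring_1 itself \<Rightarrow> bool" where
  "local_ring _ \<longleftrightarrow> (1::'r) \<noteq> 0 \<and>
     (\<forall>x y::'r. \<not> is_unit x \<and> \<not> is_unit y \<longrightarrow> \<not> is_unit (x + y))"

definition max_ideal :: "'r::ring_1 set" where
  "max_ideal = {x. \<not> is_unit x}"

definition left_ideal :: "'r::ring_1 set \<Rightarrow> bool" where
  "left_ideal I \<longleftrightarrow> 0 \<in> I \<and> (\<forall>x\<in>I. \<forall>y\<in>I. x + y \<in> I) \<and> (\<forall>r. \<forall>x\<in>I. r * x \<in> I)"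

definition right_ideal :: "'r::ring_1 set \<Rightarrow> bool" where
  "right_ideal I \<longleftrightarrow> 0 \<in> I \<and> (\<forall>x\<in>I. \<forall>y\<in>I. x + y \<in> I) \<and> (\<forall>r. \<forall>x\<in>I. x * r \<in> I)"

definition noetherian_ring :: "'r::ring_1 itself \<Rightarrow> bool" where
  "noetherian_ring _ \<longleftrightarrow>
     (\<forall>I :: nat \<Rightarrow> 'r set. (\<forall>n. left_ideal (I n)) \<and> (\<forall>n. I n \<subseteq> I (Suc n))
          \<longrightarrow> (\<exists>N. \<forall>n\<ge>N. I n = I N)) \<and>
     (\<forall>I :: nat \<Rightarrow> 'r set. (\<forall>n. right_ideal (I n)) \<and> (\<forall>n. I n \<subseteq> I (Suc n))
          \<longrightarrow> (\<exists>N. \<forall>n\<ge>N. I n = I N))"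

definition ideal_sq :: "'r::ring_1 set \<Rightarrow> 'r set" where
  "ideal_sq I = {s. \<exists>(n::nat) xs ys. (\<forall>i<n. xs i \<in> I \<and> ys i \<in> I) \<and> s = (\<Sum>i<n. xs i * ys i)}"

definition ring_automorphism :: "('r::ring_1 \<Rightarrow> 'r) \<Rightarrow> bool" where
  "ring_automorphism \<sigma> \<longleftrightarrow> bij \<sigma> \<and> \<sigma> 1 = 1 \<and>
     (\<forall>x y. \<sigma> (x + y) = \<sigma> x + \<sigma> y) \<and> (\<forall>x y. \<sigma> (x * y) = \<sigma> x * \<sigma> y)"

definition sigma_derivation :: "('r::ring_1 \<Rightarrow> 'r) \<Rightarrow> ('r \<Rightarrow> 'r) \<Rightarrow> bool" where
  "sigma_derivation \<sigma> \<delta> \<longleftrightarrow> (\<forall>x y. \<delta> (x + y) = \<delta> x + \<delta> y) \<and>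
     (\<forall>x y. \<delta> (x * y) = \<delta> x * y + \<sigma> x * \<delta> y)"

text \<open>Elements are coefficient sequences a, standing for the series sum of a n * Y^n.
  skew_coeff sigma delta n i r is the coefficient c(n,i)(r) in Y^n r = sum_i c(n,i)(r) Y^i,
  computed from Y r = sigma(r) Y + delta(r).\<close>
fun skew_coeff :: "('r::ring_1 \<Rightarrow> 'r) \<Rightarrow> ('r \<Rightarrow> 'r) \<Rightarrow> nat \<Rightarrow> nat \<Rightarrow> 'r \<Rightarrow> 'r" where
  "skew_coeff \<sigma> \<delta> 0 i r = (if i = 0 then r else 0)"
| "skew_coeff \<sigma> \<delta> (Suc n) i r =
     (case i of 0 \<Rightarrow> 0 | Suc j \<Rightarrow> \<sigma> (skew_coeff \<sigma> \<delta> n j r)) + \<delta> (skew_coeff \<sigma> \<delta> n i r)"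

type_synonym 'r sps = "nat \<Rightarrow> 'r"

definition sps_add :: "'r::ring_1 sps \<Rightarrow> 'r sps \<Rightarrow> 'r sps" where
  "sps_add a b = (\<lambda>k. a k + b k)"

definition sps_one :: "'r::ring_1 sps" where
  "sps_one = (\<lambda>k. if k = 0 then 1 else 0)"

definition sps_const :: "'r::ring_1 \<Rightarrow> 'r sps" where
  "sps_const r = (\<lambda>k. if k = 0 then r else 0)"

text \<open>(sum a_n Y^n)(sum b_m Y^m) = sum_{n,m,i} a_n c(n,i)(b_m) Y^(i+m); the inner sum over n
  is an infinite series, convergent in the (m-adic) topology of R.\<close>
definition sps_mult :: "('r::{ring_1,topological_space} \<Rightarrow> 'r) \<Rightarrow> ('r \<Rightarrow> 'r) \<Rightarrow> 'r sps \<Rightarrow> 'r sps \<Rightarrow> 'r sps" where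
  "sps_mult \<sigma> \<delta> a b = (\<lambda>k. \<Sum>m\<le>k. (\<Sum>n. a n * skew_coeff \<sigma> \<delta> n (k - m) (b m)))"

definition is_skew_poly :: "'r::ring_1 sps \<Rightarrow> bool" where
  "is_skew_poly a \<longleftrightarrow> finite {n. a n \<noteq> 0}"

text \<open>Left module over the ring of those series satisfying P (P = all series: A-module;
  P = is_skew_poly: B-module), acting on the whole type 'm.\<close>
definition sps_module ::
  "('r::{ring_1,topological_space} \<Rightarrow> 'r) \<Rightarrow> ('r \<Rightarrow> 'r) \<Rightarrow> ('r sps \<Rightarrow> bool)
     \<Rightarrow> ('r sps \<Rightarrow> 'm::ab_group_add \<Rightarrow> 'm) \<Rightarrow> bool" where
  "sps_module \<sigma> \<delta> P act \<longleftrightarrow>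
     (\<forall>a b x. P a \<and> P b \<longrightarrow> act (sps_add a b) x = act a x + act b x) \<and>
     (\<forall>a x y. P a \<longrightarrow> act a (x + y) = act a x + act a y) \<and>
     (\<forall>x. act sps_one x = x) \<and>
     (\<forall>a b x. P a \<and> P b \<longrightarrow> act (sps_mult \<sigma> \<delta> a b) x = act a (act b x))"

definition submodule :: "('r sps \<Rightarrow> bool) \<Rightarrow> ('r sps \<Rightarrow> 'm::ab_group_add \<Rightarrow> 'm) \<Rightarrow> 'm set \<Rightarrow> bool" where
  "submodule P act N \<longleftrightarrow> 0 \<in> N \<and> (\<forall>x\<in>N. \<forall>y\<in>N. x + y \<in> N) \<and>
     (\<forall>a. P a \<longrightarrow> (\<forall>x\<in>N. act a x \<in> N))"

definition fin_gen :: "('r sps \<Rightarrow> bool) \<Rightarrow> ('r sps \<Rightarrow> 'm::ab_group_add \<Rightarrow> 'm) \<Rightarrow> bool" where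
  "fin_gen P act \<longleftrightarrow> (\<exists>S. finite S \<and>
     (\<forall>x. \<exists>c. (\<forall>s\<in>S. P (c s)) \<and> x = (\<Sum>s\<in>S. act (c s) s)))"

definition is_const_sps :: "'r::ring_1 sps \<Rightarrow> bool" where
  "is_const_sps a \<longleftrightarrow> (\<exists>r. a = sps_const r)"

end

theory Submission
  imports Defs "HOL-Library.Set_Algebras" "HOL-Library.FuncSet" "HOL-Analysis.Elementary_Topology"
begin

text \<open>For \<open>x \<in> N\<close> put \<open>W = A x\<close>. It is an \<open>R\<close>-submodule of the finitely generated
  \<open>R\<close>-module \<open>M\<close>, hence finitely generated. Since \<open>R\<close> is compact, \<open>R/m\<close> is finite, so
  \<open>W/mW\<close> is finite and \<open>Y\<close> acts on it eventually periodically: \<open>Y\<^sup>K (1 - Y\<^sup>p) W \<subseteq> mW\<close>.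
  Because \<open>1 - Y\<^sup>p\<close> is a unit of \<open>A\<close> and \<open>mW\<close> is \<open>A\<close>-stable (the hypotheses on \<open>\<delta>\<close>
  make the coefficients of \<open>Y\<^sup>n r\<close> tend to \<open>0\<close> \<open>m\<close>-adically, and by compactness the
  \<open>m\<close>-adic topology is the given one), already \<open>Y\<^sup>K W \<subseteq> mW\<close>. Splitting a series into its
  part of degree \<open>< K\<close> and a multiple of \<open>Y\<^sup>K\<close> then gives \<open>W \<subseteq> (N \<inter> W) + mW\<close>, and
  Nakayama's lemma yields \<open>A x \<subseteq> N\<close>. For quotients, apply this to the kernel.\<close>

section \<open>Local rings\<close>

lemma is_unit_one [simp]: "is_unit (1::'r::ring_1)"
  by (auto simp: is_unit_def)

lemma mem_max_ideal_iff: "x \<in> max_ideal \<longleftrightarrow> \<not> is_unit x"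
  by (simp add: max_ideal_def)

lemma idempotent_unit_eq_one:
  fixes e :: "'r::ring_1"
  assumes idem: "e * e = e" and "is_unit e"
  shows "e = 1"
proof -
  obtain u where u: "e * u = 1" using \<open>is_unit e\<close> unfolding is_unit_def by blast
  have "e = e * (e * u)" by (simp add: u)
  also have "\<dots> = e * u" by (simp add: mult.assoc[symmetric] idem)
  finally show ?thesis using u by simp
qed

context
  assumes local_ring: "local_ring TYPE('r::ring_1)"
begin

lemma right_inverse_imp_left_inverse:
  fixes x y :: 'r
  assumes xy: "x * y = 1"
  shows "y * x = 1"
proof (rule ccontr)
  define e where "e = y * x"
  assume "y * x \<noteq> 1"
  then have "e \<noteq> 1" by (simp add: e_def)
  have "e * e = y * (x * y) * x" by (simp add: e_def mult.assoc)
  then have idem: "e * e = e" by (simp add: xy e_def)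
  have "\<not> is_unit e"
    using idempotent_unit_eq_one[OF idem] \<open>e \<noteq> 1\<close> by blast
  moreover have "\<not> is_unit (1 - e)"
  proof
    assume "is_unit (1 - e)"
    moreover have "(1 - e) * (1 - e) = 1 - e" using idem by (simp add: algebra_simps)
    ultimately have "e = 0" using idempotent_unit_eq_one by fastforce
    have "y = y * (x * y)" by (simp add: xy)
    also have "\<dots> = e * y" by (simp add: e_def mult.assoc)
    finally have "y = 0" using \<open>e = 0\<close> by simp
    then show False using xy local_ring by (simp add: local_ring_def)
  qed
  ultimately have "\<not> is_unit (e + (1 - e))"
    using local_ring unfolding local_ring_def by blast
  then show False by simp
qed

lemma max_ideal_mult_left: "x \<in> max_ideal \<Longrightarrow> r * x \<in> (max_ideal :: 'r set)"
  unfolding mem_max_ideal_iff is_unit_def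
  by (metis mult.assoc right_inverse_imp_left_inverse)

lemma max_ideal_mult_right: "x \<in> max_ideal \<Longrightarrow> x * r \<in> (max_ideal :: 'r set)"
  unfolding mem_max_ideal_iff is_unit_def
  by (metis mult.assoc right_inverse_imp_left_inverse)

lemma max_ideal_add: "x \<in> max_ideal \<Longrightarrow> y \<in> max_ideal \<Longrightarrow> x + y \<in> (max_ideal :: 'r set)"
  using local_ring unfolding local_ring_def mem_max_ideal_iff by blast

lemma zero_in_max_ideal [simp]: "(0::'r) \<in> max_ideal"
  using local_ring unfolding local_ring_def mem_max_ideal_iff is_unit_def by auto

lemma max_ideal_sum: "(\<And>i. i \<in> A \<Longrightarrow> f i \<in> max_ideal) \<Longrightarrow> sum f A \<in> (max_ideal :: 'r set)"
  by (induction A rule: infinite_finite_induct) (simp_all add: max_ideal_add)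

lemma is_unit_one_minus: "a \<in> max_ideal \<Longrightarrow> is_unit (1 - a :: 'r)"
  using max_ideal_add[of "1 - a" a] by (auto simp: mem_max_ideal_iff)

lemma right_ideal_max_ideal: "right_ideal (max_ideal :: 'r set)"
  by (simp add: right_ideal_def max_ideal_add max_ideal_mult_right)

end

section \<open>Finite generation from the ascending chain condition\<close>

lemma ascending_chain_imp_finitely_generated:
  fixes gen :: "'a set \<Rightarrow> 'a set"
  assumes acc: "\<forall>I::nat \<Rightarrow> 'a set. (\<forall>n. P (I n)) \<and> (\<forall>n. I n \<subseteq> I (Suc n))
                  \<longrightarrow> (\<exists>N. \<forall>n\<ge>N. I n = I N)"
    and P_gen: "\<And>G. P (gen G)"
    and gen_superset: "\<And>G. finite G \<Longrightarrow> G \<subseteq> gen G"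
    and gen_least: "\<And>G I. P I \<Longrightarrow> G \<subseteq> I \<Longrightarrow> gen G \<subseteq> I"
    and "P I"
  shows "\<exists>G. finite G \<and> G \<subseteq> I \<and> I = gen G"
proof (rule ccontr)
  assume not_fg: "\<not> ?thesis"
  have "\<exists>x. x \<in> I - gen G" if "finite G" "G \<subseteq> I" for G
  proof -
    have "gen G \<subseteq> I" using gen_least[OF \<open>P I\<close> that(2)] .
    moreover have "I \<noteq> gen G" using not_fg that by blast
    ultimately show ?thesis by blast
  qed
  then have "\<forall>G. \<exists>x. finite G \<and> G \<subseteq> I \<longrightarrow> x \<in> I - gen G" by blast
  from choice[OF this] obtain new
    where "\<forall>G. finite G \<and> G \<subseteq> I \<longrightarrow> new G \<in> I - gen G" ..
  then have new: "\<And>G. finite G \<Longrightarrow> G \<subseteq> I \<Longrightarrow> new G \<in> I - gen G" by blast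
  define Gs where "Gs n = ((\<lambda>G. insert (new G) G) ^^ n) {}" for n
  have Gs_Suc: "Gs (Suc n) = insert (new (Gs n)) (Gs n)" for n
    by (simp add: Gs_def)
  have Gs: "finite (Gs n) \<and> Gs n \<subseteq> I" for n
  proof (induction n)
    case 0
    then show ?case by (simp add: Gs_def)
  next
    case (Suc n)
    then show ?case using new[of "Gs n"] by (simp add: Gs_Suc)
  qed
  have chain: "gen (Gs n) \<subseteq> gen (Gs (Suc n))" for n
  proof (rule gen_least[OF P_gen])
    show "Gs n \<subseteq> gen (Gs (Suc n))"
      using gen_superset[of "Gs (Suc n)"] Gs[of "Suc n"] by (auto simp: Gs_Suc)
  qed
  have "\<exists>N. \<forall>n\<ge>N. gen (Gs n) = gen (Gs N)"
    using P_gen chain by (intro acc[rule_format, of "\<lambda>n. gen (Gs n)"]) simp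
  then obtain N where N: "\<And>n. n \<ge> N \<Longrightarrow> gen (Gs n) = gen (Gs N)" by blast
  have "gen (Gs (Suc N)) = gen (Gs N)" by (rule N) simp
  moreover have "new (Gs N) \<in> gen (Gs (Suc N))"
    using gen_superset[of "Gs (Suc N)"] Gs[of "Suc N"] by (auto simp: Gs_Suc)
  ultimately show False using new[of "Gs N"] Gs[of N] by blast
qed

definition right_combs :: "'r::ring_1 set \<Rightarrow> 'r set \<Rightarrow> 'r set" where
  "right_combs G K = {x. \<exists>z. (\<forall>g\<in>G. z g \<in> K) \<and> x = (\<Sum>g\<in>G. g * z g)}"

lemma right_ideal_right_combs: "right_ideal (right_combs G UNIV)"
  unfolding right_ideal_def right_combs_def
proof (intro conjI ballI allI)
  show "0 \<in> {x. \<exists>z. (\<forall>g\<in>G. z g \<in> UNIV) \<and> x = (\<Sum>g\<in>G. g * z g)}"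
    by (auto intro!: exI[of _ "\<lambda>_. 0"])
next
  fix x y assume "x \<in> {x. \<exists>z. (\<forall>g\<in>G. z g \<in> UNIV) \<and> x = (\<Sum>g\<in>G. g * z g)}"
    and "y \<in> {x. \<exists>z. (\<forall>g\<in>G. z g \<in> UNIV) \<and> x = (\<Sum>g\<in>G. g * z g)}"
  then obtain z z' where "x = (\<Sum>g\<in>G. g * z g)" "y = (\<Sum>g\<in>G. g * z' g)" by blast
  then have "x + y = (\<Sum>g\<in>G. g * (z g + z' g))" by (simp add: sum.distrib distrib_left)
  then show "x + y \<in> {x. \<exists>z. (\<forall>g\<in>G. z g \<in> UNIV) \<and> x = (\<Sum>g\<in>G. g * z g)}"
    by (intro CollectI exI[of _ "\<lambda>g. z g + z' g"]) simp
next
  fix r x assume "x \<in> {x. \<exists>z. (\<forall>g\<in>G. z g \<in> UNIV) \<and> x = (\<Sum>g\<in>G. g * z g)}"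
  then obtain z where "x = (\<Sum>g\<in>G. g * z g)" by blast
  then have "x * r = (\<Sum>g\<in>G. g * (z g * r))" by (simp add: sum_distrib_right mult.assoc)
  then show "x * r \<in> {x. \<exists>z. (\<forall>g\<in>G. z g \<in> UNIV) \<and> x = (\<Sum>g\<in>G. g * z g)}"
    by (intro CollectI exI[of _ "\<lambda>g. z g * r"]) simp
qed

lemma right_combs_superset: "finite G \<Longrightarrow> G \<subseteq> right_combs G UNIV"
proof
  fix g assume "finite G" "g \<in> G"
  then have "g = (\<Sum>h\<in>G. h * (if h = g then 1 else 0))"
    by (simp add: if_distrib[of "(*) _"] cong: if_cong)
  then show "g \<in> right_combs G UNIV"
    unfolding right_combs_def by (intro CollectI exI[of _ "\<lambda>h. if h = g then 1 else 0"]) simp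
qed

lemma right_ideal_sum:
  "right_ideal I \<Longrightarrow> (\<And>a. a \<in> A \<Longrightarrow> f a \<in> I) \<Longrightarrow> sum f A \<in> I"
  by (induction A rule: infinite_finite_induct) (simp_all add: right_ideal_def)

lemma right_combs_least:
  assumes I: "right_ideal I" and "G \<subseteq> I"
  shows "right_combs G K \<subseteq> I"
proof
  fix x assume "x \<in> right_combs G K"
  then obtain z where x: "x = (\<Sum>g\<in>G. g * z g)" unfolding right_combs_def by blast
  have "g * z g \<in> I" if "g \<in> G" for g
    using I \<open>G \<subseteq> I\<close> that unfolding right_ideal_def by blast
  then show "x \<in> I" unfolding x by (rule right_ideal_sum[OF I])
qed

lemma noetherian_right_ideal_finitely_generated:
  fixes I :: "'r::ring_1 set"
  assumes "noetherian_ring TYPE('r)" "right_ideal I"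
  shows "\<exists>G. finite G \<and> G \<subseteq> I \<and> I = right_combs G UNIV"
proof (rule ascending_chain_imp_finitely_generated[where P = right_ideal])
  show "\<forall>I::nat \<Rightarrow> 'r set. (\<forall>n. right_ideal (I n)) \<and> (\<forall>n. I n \<subseteq> I (Suc n))
          \<longrightarrow> (\<exists>N. \<forall>n\<ge>N. I n = I N)"
    using assms(1) unfolding noetherian_ring_def by (rule conjunct2)
qed (simp_all add: assms(2) right_ideal_right_combs right_combs_superset right_combs_least)

section \<open>Left modules over a ring\<close>

locale left_module =
  fixes scale :: "'r::ring_1 \<Rightarrow> 'm::ab_group_add \<Rightarrow> 'm"  (infixr \<open>*s\<close> 75)
  assumes scale_right_distrib: "a *s (x + y) = a *s x + a *s y"
    and scale_left_distrib: "(a + b) *s x = a *s x + b *s x"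
    and scale_scale: "a *s (b *s x) = (a * b) *s x"
    and scale_one [simp]: "1 *s x = x"
begin

lemma scale_zero_left [simp]: "0 *s x = 0"
  using scale_left_distrib[of 0 0 x] by simp

lemma scale_zero_right [simp]: "a *s 0 = 0"
  using scale_right_distrib[of a 0 0] by simp

lemma scale_minus_left: "(- a) *s x = - (a *s x)"
  using scale_left_distrib[of a "- a" x] add.inverse_unique[of "a *s x" "(- a) *s x"] by simp

lemma scale_left_diff_distrib: "(a - b) *s x = a *s x - b *s x"
  using scale_left_distrib[of a "- b" x] by (simp add: scale_minus_left)

lemma scale_sum_left: "(sum f A) *s x = (\<Sum>i\<in>A. f i *s x)"
  by (induction A rule: infinite_finite_induct) (simp_all add: scale_left_distrib)

lemma scale_sum_right: "a *s (sum f A) = (\<Sum>i\<in>A. a *s f i)"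
  by (induction A rule: infinite_finite_induct) (simp_all add: scale_right_distrib)

definition span :: "'m set \<Rightarrow> 'm set" where
  "span G = {x. \<exists>c. x = (\<Sum>g\<in>G. c g *s g)}"

definition is_submodule :: "'m set \<Rightarrow> bool" where
  "is_submodule L \<longleftrightarrow> 0 \<in> L \<and> (\<forall>x\<in>L. \<forall>y\<in>L. x + y \<in> L) \<and> (\<forall>a. \<forall>x\<in>L. a *s x \<in> L)"

context
  fixes L assumes L: "is_submodule L"
begin

lemma submodule_zero: "0 \<in> L"
  using L by (simp add: is_submodule_def)

lemma submodule_add: "x \<in> L \<Longrightarrow> y \<in> L \<Longrightarrow> x + y \<in> L"
  using L by (simp add: is_submodule_def)

lemma submodule_scale: "x \<in> L \<Longrightarrow> a *s x \<in> L"
  using L by (simp add: is_submodule_def)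

lemma submodule_minus: "x \<in> L \<Longrightarrow> - x \<in> L"
  using submodule_scale[of x "- 1"] by (simp add: scale_minus_left)

lemma submodule_diff: "x \<in> L \<Longrightarrow> y \<in> L \<Longrightarrow> x - y \<in> L"
  using submodule_add[of x "- y"] submodule_minus[of y] by simp

lemma submodule_sum: "(\<And>i. i \<in> A \<Longrightarrow> f i \<in> L) \<Longrightarrow> sum f A \<in> L"
  by (induction A rule: infinite_finite_induct) (simp_all add: submodule_zero submodule_add)

lemma submodule_set_plus_self: "L + L = L"
proof
  show "L + L \<subseteq> L" by (auto elim!: set_plus_elim simp: submodule_add)
  show "L \<subseteq> L + L" using set_zero_plus2[OF submodule_zero] .
qed

end

lemma is_submodule_Int: "is_submodule L \<Longrightarrow> is_submodule L' \<Longrightarrow> is_submodule (L \<inter> L')"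
  by (simp add: is_submodule_def)

lemma is_submodule_set_plus:
  assumes "is_submodule L" "is_submodule L'"
  shows "is_submodule (L + L')"
  unfolding is_submodule_def
proof (intro conjI ballI allI)
  show "0 \<in> L + L'"
    using set_plus_intro[OF submodule_zero[OF assms(1)] submodule_zero[OF assms(2)]] by simp
next
  fix x y assume "x \<in> L + L'" "y \<in> L + L'"
  then obtain a b a' b' where "x = a + b" "a \<in> L" "b \<in> L'" "y = a' + b'" "a' \<in> L" "b' \<in> L'"
    by (auto elim!: set_plus_elim)
  then have "x + y = (a + a') + (b + b')" "a + a' \<in> L" "b + b' \<in> L'"
    using submodule_add[OF assms(1)] submodule_add[OF assms(2)] by (simp_all add: ac_simps)
  then show "x + y \<in> L + L'" by auto
next
  fix c x assume "x \<in> L + L'"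
  then obtain a b where "x = a + b" "a \<in> L" "b \<in> L'" by (auto elim!: set_plus_elim)
  then show "c *s x \<in> L + L'"
    using submodule_scale[OF assms(1)] submodule_scale[OF assms(2)]
    by (auto simp: scale_right_distrib)
qed

lemma is_submodule_span: "is_submodule (span G)"
  unfolding is_submodule_def span_def
proof (intro conjI ballI allI)
  show "0 \<in> {x. \<exists>c. x = (\<Sum>g\<in>G. c g *s g)}"
    by (intro CollectI exI[of _ "\<lambda>_. 0"]) simp
next
  fix x y assume "x \<in> {x. \<exists>c. x = (\<Sum>g\<in>G. c g *s g)}" "y \<in> {x. \<exists>c. x = (\<Sum>g\<in>G. c g *s g)}"
  then obtain c d where "x = (\<Sum>g\<in>G. c g *s g)" "y = (\<Sum>g\<in>G. d g *s g)" by blast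
  then have "x + y = (\<Sum>g\<in>G. (c g + d g) *s g)" by (simp add: sum.distrib scale_left_distrib)
  then show "x + y \<in> {x. \<exists>c. x = (\<Sum>g\<in>G. c g *s g)}" by (intro CollectI exI)
next
  fix a x assume "x \<in> {x. \<exists>c. x = (\<Sum>g\<in>G. c g *s g)}"
  then obtain c where "x = (\<Sum>g\<in>G. c g *s g)" by blast
  then have "a *s x = (\<Sum>g\<in>G. (a * c g) *s g)" by (simp add: scale_sum_right scale_scale)
  then show "a *s x \<in> {x. \<exists>c. x = (\<Sum>g\<in>G. c g *s g)}" by (intro CollectI exI)
qed

lemma span_superset: "finite G \<Longrightarrow> G \<subseteq> span G"
proof
  fix g assume "finite G" "g \<in> G"
  then have "g = (\<Sum>h\<in>G. (if h = g then 1 else 0) *s h)"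
    by (simp add: if_distrib[of "\<lambda>a. a *s _"] cong: if_cong)
  then show "g \<in> span G" unfolding span_def by (intro CollectI exI)
qed

lemma span_minimal: "is_submodule L \<Longrightarrow> G \<subseteq> L \<Longrightarrow> span G \<subseteq> L"
  unfolding span_def by (auto intro!: submodule_sum submodule_scale)

lemma span_empty [simp]: "span {} = {0}"
  by (simp add: span_def)

inductive_set max_ideal_scale :: "'m set \<Rightarrow> 'm set" for W where
  zero: "0 \<in> max_ideal_scale W"
| scale_add: "r \<in> max_ideal \<Longrightarrow> w \<in> W \<Longrightarrow> s \<in> max_ideal_scale W \<Longrightarrow> r *s w + s \<in> max_ideal_scale W"

lemma max_ideal_scale_add:
  "x \<in> max_ideal_scale W \<Longrightarrow> y \<in> max_ideal_scale W \<Longrightarrow> x + y \<in> max_ideal_scale W"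
  by (induction x rule: max_ideal_scale.induct)
    (simp_all add: add.assoc max_ideal_scale.scale_add)

lemma max_ideal_scale_single: "r \<in> max_ideal \<Longrightarrow> w \<in> W \<Longrightarrow> r *s w \<in> max_ideal_scale W"
  using max_ideal_scale.scale_add[OF _ _ max_ideal_scale.zero] by simp

lemma max_ideal_scale_sum:
  "(\<And>i. i \<in> A \<Longrightarrow> f i \<in> max_ideal_scale W) \<Longrightarrow> sum f A \<in> max_ideal_scale W"
  by (induction A rule: infinite_finite_induct)
    (simp_all add: max_ideal_scale.zero max_ideal_scale_add)

lemma max_ideal_scale_mono:
  assumes "W \<subseteq> W'"
  shows "max_ideal_scale W \<subseteq> max_ideal_scale W'"
proof
  fix x assume "x \<in> max_ideal_scale W"
  then show "x \<in> max_ideal_scale W'" using assms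
    by (induction x rule: max_ideal_scale.induct) (auto intro: max_ideal_scale.intros)
qed

lemma max_ideal_scale_set_plus:
  assumes N: "is_submodule N"
  shows "max_ideal_scale (N + W) \<subseteq> N + max_ideal_scale W"
proof
  fix x assume "x \<in> max_ideal_scale (N + W)"
  then show "x \<in> N + max_ideal_scale W"
  proof (induction x rule: max_ideal_scale.induct)
    case zero
    show ?case using set_plus_intro[OF submodule_zero[OF N] max_ideal_scale.zero] by simp
  next
    case (scale_add r w s)
    obtain l v where lv: "w = l + v" "l \<in> N" "v \<in> W"
      using scale_add.hyps(2) by (auto elim: set_plus_elim)
    obtain l' v' where lv': "s = l' + v'" "l' \<in> N" "v' \<in> max_ideal_scale W"
      using scale_add.IH by (auto elim: set_plus_elim)
    have "r *s w + s = (r *s l + l') + (r *s v + v')"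
      using lv lv' by (simp add: scale_right_distrib ac_simps)
    moreover have "r *s l + l' \<in> N"
      using lv lv' by (intro submodule_add[OF N] submodule_scale[OF N])
    moreover have "r *s v + v' \<in> max_ideal_scale W"
      using scale_add.hyps(1) lv lv' by (intro max_ideal_scale.scale_add)
    ultimately show ?case by auto
  qed
qed

context
  assumes local_ring: "local_ring TYPE('r)"
begin

lemma max_ideal_scale_scale: "x \<in> max_ideal_scale W \<Longrightarrow> a *s x \<in> max_ideal_scale W"
proof (induction x rule: max_ideal_scale.induct)
  case zero
  then show ?case by (simp add: max_ideal_scale.zero)
next
  case (scale_add r w s)
  have "a *s (r *s w + s) = (a * r) *s w + a *s s"
    by (simp add: scale_right_distrib scale_scale)
  then show ?case
    using scale_add max_ideal_mult_left[OF local_ring] by (simp add: max_ideal_scale.scale_add)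
qed

lemma is_submodule_max_ideal_scale: "is_submodule (max_ideal_scale W)"
  by (simp add: is_submodule_def max_ideal_scale.zero max_ideal_scale_add max_ideal_scale_scale)

lemma max_ideal_scale_span_coeffs:
  assumes "y \<in> max_ideal_scale (span G)"
  shows "\<exists>a. (\<forall>g. a g \<in> max_ideal) \<and> y = (\<Sum>g\<in>G. a g *s g)"
  using assms
proof (induction y rule: max_ideal_scale.induct)
  case zero
  show ?case by (intro exI[of _ "\<lambda>_. 0"]) (simp add: zero_in_max_ideal[OF local_ring])
next
  case (scale_add r w s)
  obtain c where c: "w = (\<Sum>g\<in>G. c g *s g)" using scale_add.hyps(2) unfolding span_def by blast
  obtain a where a: "\<forall>g. a g \<in> max_ideal" "s = (\<Sum>g\<in>G. a g *s g)" using scale_add.IH by blast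
  define a' where "a' g = r * c g + a g" for g
  have "r *s w + s = (\<Sum>g\<in>G. a' g *s g)"
    unfolding c a a'_def by (simp add: scale_sum_right scale_scale scale_left_distrib sum.distrib)
  moreover have "\<forall>g. a' g \<in> max_ideal"
    using a(1) scale_add.hyps(1) max_ideal_add[OF local_ring] max_ideal_mult_right[OF local_ring]
    by (simp add: a'_def)
  ultimately show ?case by blast
qed

lemma nakayama_generator:
  assumes "finite G" "h \<notin> G" and N: "is_submodule N"
    and h: "h \<in> N + max_ideal_scale (span (insert h G))"
  shows "h \<in> N + span G"
proof -
  obtain l y where ly: "h = l + y" "l \<in> N" "y \<in> max_ideal_scale (span (insert h G))"
    using h by (auto elim: set_plus_elim)
  obtain a where a: "\<forall>g. a g \<in> max_ideal" "y = (\<Sum>g\<in>insert h G. a g *s g)"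
    using max_ideal_scale_span_coeffs[OF ly(3)] by blast
  define z where "z = (\<Sum>g\<in>G. a g *s g)"
  have "(1 - a h) *s h = l + z"
    using ly(1) a(2) assms(1,2) by (simp add: z_def scale_left_diff_distrib algebra_simps)
  moreover obtain u where u: "u * (1 - a h) = 1"
    using is_unit_one_minus[OF local_ring a(1)[rule_format, of h]] unfolding is_unit_def by blast
  ultimately have "h = u *s l + u *s z"
    by (metis scale_one scale_right_distrib scale_scale)
  moreover have "u *s l \<in> N" using submodule_scale[OF N ly(2)] .
  moreover have "z \<in> span G" unfolding z_def span_def by blast
  then have "u *s z \<in> span G" by (rule submodule_scale[OF is_submodule_span])
  ultimately show ?thesis by auto
qed

theorem nakayama:
  assumes "finite G" and N: "is_submodule N"
    and "span G \<subseteq> N + max_ideal_scale (span G)"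
  shows "span G \<subseteq> N"
  using assms(1,3)
proof (induction G rule: finite_induct)
  case empty
  then show ?case using submodule_zero[OF N] by simp
next
  case (insert h G)
  have "h \<in> N + span G"
    using insert.prems span_superset[of "insert h G"] insert.hyps
    by (intro nakayama_generator[OF insert.hyps(1,2) N]) auto
  moreover have "G \<subseteq> N + span G"
    using span_superset[OF insert.hyps(1)] set_zero_plus2[OF submodule_zero[OF N]] by blast
  ultimately have span_insert: "span (insert h G) \<subseteq> N + span G"
    by (intro span_minimal is_submodule_set_plus N is_submodule_span) auto
  have "span G \<subseteq> span (insert h G)"
    using span_superset[of "insert h G"] insert.hyps(1)
    by (intro span_minimal is_submodule_span) auto
  also have "\<dots> \<subseteq> N + max_ideal_scale (span (insert h G))" by (rule insert.prems)
  also have "\<dots> \<subseteq> N + max_ideal_scale (N + span G)"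
    using span_insert by (intro set_plus_mono2 max_ideal_scale_mono) auto
  also have "\<dots> \<subseteq> N + (N + max_ideal_scale (span G))"
    using max_ideal_scale_set_plus[OF N] by (intro set_plus_mono2) auto
  also have "\<dots> = N + max_ideal_scale (span G)"
    by (simp add: add.assoc[symmetric] submodule_set_plus_self[OF N])
  finally have "span G \<subseteq> N" by (rule insert.IH)
  then have "N + span G \<subseteq> N"
    using submodule_set_plus_self[OF N] set_plus_mono2[of N N "span G" N] by simp
  then show ?case using span_insert by blast
qed

end

end

interpretation regular: left_module "(*) :: 'r::ring_1 \<Rightarrow> 'r \<Rightarrow> 'r"
  by unfold_locales (simp_all add: algebra_simps)

lemma regular_is_submodule_iff: "regular.is_submodule I \<longleftrightarrow> left_ideal I"
  by (simp add: regular.is_submodule_def left_ideal_def)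

lemma noetherian_left_ideal_finitely_generated:
  fixes I :: "'r::ring_1 set"
  assumes "noetherian_ring TYPE('r)" "left_ideal I"
  shows "\<exists>G. finite G \<and> G \<subseteq> I \<and> I = regular.span G"
proof (rule ascending_chain_imp_finitely_generated[where P = regular.is_submodule])
  show "\<forall>I::nat \<Rightarrow> 'r set. (\<forall>n. regular.is_submodule (I n)) \<and> (\<forall>n. I n \<subseteq> I (Suc n))
          \<longrightarrow> (\<exists>N. \<forall>n\<ge>N. I n = I N)"
    using assms(1) unfolding noetherian_ring_def regular_is_submodule_iff by (rule conjunct1)
qed (use assms(2) in \<open>simp_all add: regular_is_submodule_iff regular.span_superset
      regular.span_minimal regular.is_submodule_span[unfolded regular_is_submodule_iff]\<close>)

context left_module
begin

lemma span_insert_decomp: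
  assumes "finite S" "s \<notin> S" "x \<in> span (insert s S)"
  obtains a y where "y \<in> span S" "x = a *s s + y"
proof -
  obtain c where "x = (\<Sum>g\<in>insert s S. c g *s g)" using assms(3) unfolding span_def by blast
  then have "x = c s *s s + (\<Sum>g\<in>S. c g *s g)" using assms(1,2) by simp
  moreover have "(\<Sum>g\<in>S. c g *s g) \<in> span S" unfolding span_def by blast
  ultimately show ?thesis using that by blast
qed

lemma left_ideal_leading_coeffs:
  assumes N: "is_submodule N"
  shows "left_ideal {a. \<exists>y\<in>span S. a *s s + y \<in> N}"
  unfolding left_ideal_def
proof (intro conjI ballI allI)
  show "0 \<in> {a. \<exists>y\<in>span S. a *s s + y \<in> N}"
    using submodule_zero[OF N] submodule_zero[OF is_submodule_span] by auto
next
  fix a b assume "a \<in> {a. \<exists>y\<in>span S. a *s s + y \<in> N}" "b \<in> {a. \<exists>y\<in>span S. a *s s + y \<in> N}"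
  then obtain y z where yz: "y \<in> span S" "a *s s + y \<in> N" "z \<in> span S" "b *s s + z \<in> N"
    by blast
  then have "(a + b) *s s + (y + z) \<in> N"
    using submodule_add[OF N yz(2,4)] by (simp add: scale_left_distrib ac_simps)
  moreover have "y + z \<in> span S" using submodule_add[OF is_submodule_span yz(1,3)] .
  ultimately show "a + b \<in> {a. \<exists>y\<in>span S. a *s s + y \<in> N}" by blast
next
  fix r a assume "a \<in> {a. \<exists>y\<in>span S. a *s s + y \<in> N}"
  then obtain y where y: "y \<in> span S" "a *s s + y \<in> N" by blast
  then have "(r * a) *s s + r *s y \<in> N"
    using submodule_scale[OF N y(2), of r] by (simp add: scale_right_distrib scale_scale)
  moreover have "r *s y \<in> span S" using submodule_scale[OF is_submodule_span y(1)] .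
  ultimately show "r * a \<in> {a. \<exists>y\<in>span S. a *s s + y \<in> N}" by blast
qed

text \<open>Lift finitely many generators of the left ideal of leading coefficients to \<open>N\<close>.\<close>

lemma finite_generators_modulo_span:
  assumes noetherian: "noetherian_ring TYPE('r)" and S: "finite S" "s \<notin> S"
    and N: "is_submodule N" "N \<subseteq> span (insert s S)"
  shows "\<exists>H. finite H \<and> H \<subseteq> N \<and> (\<forall>x\<in>N. \<exists>v\<in>span H. x - v \<in> span S)"
proof -
  define I where "I = {a. \<exists>y\<in>span S. a *s s + y \<in> N}"
  have "\<exists>H. finite H \<and> H \<subseteq> I \<and> I = regular.span H"
    unfolding I_def
    by (rule noetherian_left_ideal_finitely_generated[OF noetherian left_ideal_leading_coeffs[OF N(1)]])
  then obtain H where H: "finite H" "H \<subseteq> I" "I = regular.span H"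
    by blast
  have "\<forall>h\<in>H. \<exists>y. y \<in> span S \<and> h *s s + y \<in> N" using H(2) unfolding I_def by blast
  from bchoice[OF this] obtain y where y: "\<forall>h\<in>H. y h \<in> span S \<and> h *s s + y h \<in> N" ..
  define lift where "lift h = h *s s + y h" for h
  have "\<exists>v\<in>span (lift ` H). x - v \<in> span S" if "x \<in> N" for x
  proof -
    have "x \<in> span (insert s S)" using N(2) that by blast
    then obtain a z where z: "z \<in> span S" "x = a *s s + z"
      by (rule span_insert_decomp[OF S])
    have "a \<in> I" unfolding I_def using z that by blast
    then have "a \<in> regular.span H" using H(3) by simp
    then obtain c where c: "a = (\<Sum>h\<in>H. c h * h)" unfolding regular.span_def by blast
    define v where "v = (\<Sum>h\<in>H. c h *s lift h)"
    have "v \<in> span (lift ` H)"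
      unfolding v_def using span_superset[of "lift ` H"] H(1)
      by (intro submodule_sum[OF is_submodule_span] submodule_scale[OF is_submodule_span]) auto
    have "v = a *s s + (\<Sum>h\<in>H. c h *s y h)"
      unfolding v_def c lift_def
      by (simp add: scale_right_distrib sum.distrib scale_sum_left scale_scale)
    then have "x - v = z - (\<Sum>h\<in>H. c h *s y h)" using z(2) by simp
    also have "\<dots> \<in> span S"
      using z(1) y by (intro submodule_diff[OF is_submodule_span] submodule_sum[OF is_submodule_span]
          submodule_scale[OF is_submodule_span]) auto
    finally have "x - v \<in> span S" .
    with \<open>v \<in> span (lift ` H)\<close> show ?thesis by blast
  qed
  moreover have "lift ` H \<subseteq> N" using y unfolding lift_def by blast
  ultimately show ?thesis using H(1) by blast
qed

theorem noetherian_submodule_finitely_generated: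
  assumes noetherian: "noetherian_ring TYPE('r)" and "finite S"
    and "is_submodule N" "N \<subseteq> span S"
  shows "\<exists>G. finite G \<and> G \<subseteq> N \<and> N = span G"
  using assms(2-4)
proof (induction S arbitrary: N rule: finite_induct)
  case empty
  then have "N \<subseteq> {0}" "0 \<in> N" using submodule_zero[of N] by simp_all
  then have "N = {0}" by blast
  then show ?case by (intro exI[of _ "{}"]) simp
next
  case (insert s S)
  have N: "is_submodule N" by fact
  have "\<exists>G'. finite G' \<and> G' \<subseteq> N \<inter> span S \<and> N \<inter> span S = span G'"
    by (rule insert.IH) (simp_all add: is_submodule_Int[OF N is_submodule_span])
  then obtain G' where G': "finite G'" "G' \<subseteq> N" "N \<inter> span S = span G'"
    by blast
  obtain H where H: "finite H" "H \<subseteq> N" "\<And>x. x \<in> N \<Longrightarrow> \<exists>v\<in>span H. x - v \<in> span S"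
    using finite_generators_modulo_span[OF noetherian insert.hyps N insert.prems(2)] by blast
  have span_mono: "span A \<subseteq> span (G' \<union> H)" if "A \<subseteq> G' \<union> H" for A
    using that span_superset[of "G' \<union> H"] G'(1) H(1)
    by (intro span_minimal[OF is_submodule_span]) auto
  have "x \<in> span (G' \<union> H)" if x: "x \<in> N" for x
  proof -
    obtain v where v: "v \<in> span H" "x - v \<in> span S" using H(3)[OF x] by blast
    then have "x - v \<in> span G'"
      using submodule_diff[OF N x] span_minimal[OF N H(2)] G'(3) by blast
    then have "(x - v) + v \<in> span (G' \<union> H)"
      using v(1) span_mono[of G'] span_mono[of H]
      by (intro submodule_add[OF is_submodule_span]) auto
    then show ?thesis by simp
  qed
  moreover have "span (G' \<union> H) \<subseteq> N" using span_minimal[OF N] G'(2) H(2) by simp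
  ultimately have "N = span (G' \<union> H)" by blast
  then show ?case using G'(1,2) H(1,2) by blast
qed

end

section \<open>Powers of the maximal ideal\<close>

primrec max_ideal_pow :: "nat \<Rightarrow> 'r::ring_1 set" where
  "max_ideal_pow 0 = UNIV"
| "max_ideal_pow (Suc j) = regular.max_ideal_scale (max_ideal_pow j)"

lemma max_ideal_pow_Suc_subset: "max_ideal_pow (Suc j) \<subseteq> max_ideal_pow j"
  by (induction j) (simp_all add: regular.max_ideal_scale_mono)

lemma max_ideal_pow_antimono: "j \<le> k \<Longrightarrow> max_ideal_pow k \<subseteq> max_ideal_pow j"
  by (rule lift_Suc_antimono_le[of max_ideal_pow, OF max_ideal_pow_Suc_subset])

lemma right_ideal_max_ideal_scale:
  assumes K: "right_ideal K"
  shows "right_ideal (regular.max_ideal_scale K)"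
proof -
  have "x * r \<in> regular.max_ideal_scale K" if "x \<in> regular.max_ideal_scale K" for x r
    using that
  proof (induction x rule: regular.max_ideal_scale.induct)
    case zero
    then show ?case by (simp add: regular.max_ideal_scale.zero)
  next
    case (scale_add a w s)
    have "(a * w + s) * r = a * (w * r) + s * r" by (simp add: algebra_simps)
    moreover have "w * r \<in> K" using K scale_add.hyps(2) by (simp add: right_ideal_def)
    ultimately show ?case
      using scale_add by (simp add: regular.max_ideal_scale.scale_add)
  qed
  then show ?thesis
    by (simp add: right_ideal_def regular.max_ideal_scale.zero regular.max_ideal_scale_add)
qed

context
  assumes local_ring: "local_ring TYPE('r::ring_1)"
begin

lemma left_ideal_max_ideal_pow: "left_ideal (max_ideal_pow j :: 'r set)"
proof (cases j)
  case 0
  then show ?thesis by (simp add: left_ideal_def)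
next
  case (Suc k)
  then show ?thesis
    using regular.is_submodule_max_ideal_scale[OF local_ring] by (simp add: regular_is_submodule_iff)
qed

lemma right_ideal_max_ideal_pow: "right_ideal (max_ideal_pow j :: 'r set)"
proof (induction j)
  case 0
  then show ?case by (simp add: right_ideal_def)
next
  case (Suc j)
  then show ?case by (simp add: right_ideal_max_ideal_scale)
qed

lemma regular_is_submodule_max_ideal_pow: "regular.is_submodule (max_ideal_pow j :: 'r set)"
  using left_ideal_max_ideal_pow by (simp add: regular_is_submodule_iff)

lemma max_ideal_pow_one: "max_ideal_pow 1 = (max_ideal :: 'r set)"
proof
  show "max_ideal_pow 1 \<subseteq> (max_ideal :: 'r set)"
  proof
    fix x :: 'r assume "x \<in> max_ideal_pow 1"
    then have "x \<in> regular.max_ideal_scale UNIV" by simp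
    then show "x \<in> max_ideal"
      by (induction x rule: regular.max_ideal_scale.induct)
        (simp_all add: zero_in_max_ideal[OF local_ring] max_ideal_add[OF local_ring]
          max_ideal_mult_right[OF local_ring])
  qed
  show "max_ideal \<subseteq> (max_ideal_pow 1 :: 'r set)"
    using regular.max_ideal_scale_single[of _ 1 UNIV] by auto
qed

lemma max_ideal_pow_mult:
  "a \<in> max_ideal_pow i \<Longrightarrow> b \<in> max_ideal_pow j \<Longrightarrow> a * b \<in> (max_ideal_pow (i + j) :: 'r set)"
proof (induction i arbitrary: a)
  case 0
  then show ?case using left_ideal_max_ideal_pow[of j] by (simp add: left_ideal_def)
next
  case (Suc i)
  from Suc.prems(1) have "a \<in> regular.max_ideal_scale (max_ideal_pow i)" by simp
  then have "a * b \<in> regular.max_ideal_scale (max_ideal_pow (i + j))"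
  proof (induction a rule: regular.max_ideal_scale.induct)
    case zero
    then show ?case by (simp add: regular.max_ideal_scale.zero)
  next
    case (scale_add x y s)
    have "(x * y + s) * b = x * (y * b) + s * b" by (simp add: algebra_simps)
    then show ?case
      using scale_add Suc.IH[OF _ Suc.prems(2)] by (simp add: regular.max_ideal_scale.scale_add)
  qed
  then show ?case by simp
qed

lemma ideal_sq_subset_max_ideal_pow_2: "ideal_sq max_ideal \<subseteq> (max_ideal_pow 2 :: 'r set)"
proof
  fix s :: 'r assume "s \<in> ideal_sq max_ideal"
  then obtain n :: nat and xs ys where xy: "\<forall>i<n. xs i \<in> max_ideal \<and> ys i \<in> max_ideal"
    and s: "s = (\<Sum>i<n. xs i * ys i)"
    by (auto simp: ideal_sq_def)
  have "xs i * ys i \<in> max_ideal_pow 2" if "i < n" for i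
  proof -
    have "xs i \<in> max_ideal_pow 1" "ys i \<in> max_ideal_pow 1"
      using xy that unfolding max_ideal_pow_one by auto
    from max_ideal_pow_mult[OF this] show ?thesis by (simp only: one_add_one)
  qed
  then show "s \<in> max_ideal_pow 2" unfolding s by (intro regular.submodule_sum[OF regular_is_submodule_max_ideal_pow]) simp
qed

end

section \<open>The topology of a compact noetherian local ring\<close>

lemma decreasing_compact_Inter_nonempty:
  fixes K :: "nat \<Rightarrow> 'a::t2_space set"
  assumes compact: "\<And>n. compact (K n)" and decreasing: "\<And>n. K (Suc n) \<subseteq> K n"
    and nonempty: "\<And>n. K n \<noteq> {}"
  shows "(\<Inter>n. K n) \<noteq> {}"
proof -
  have "K 0 \<inter> (\<Inter>n. K n) \<noteq> {}"
  proof (rule compact_imp_fip_image[OF compact])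
    show "closed (K n)" for n using compact compact_imp_closed by blast
    fix F :: "nat set" assume "finite F"
    define m where "m = Max (insert 0 F)"
    have "K m \<subseteq> K n" if "n \<in> insert 0 F" for n
      using Max_ge[of "insert 0 F" n] that \<open>finite F\<close>
      by (intro lift_Suc_antimono_le[of K, OF decreasing]) (simp add: m_def)
    then show "K 0 \<inter> (\<Inter>n\<in>F. K n) \<noteq> {}" using nonempty[of m] by blast
  qed
  then show ?thesis by blast
qed

lemma image_Inter_decreasing_compact:
  fixes K :: "nat \<Rightarrow> 'a::t2_space set" and f :: "'a \<Rightarrow> 'b::t2_space"
  assumes compact: "\<And>n. compact (K n)" and decreasing: "\<And>n. K (Suc n) \<subseteq> K n"
    and f: "continuous_on UNIV f"
  shows "(\<Inter>n. f ` K n) \<subseteq> f ` (\<Inter>n. K n)"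
proof
  fix y assume y: "y \<in> (\<Inter>n. f ` K n)"
  have "closed {x. f x = y}" using closed_Collect_eq[OF f continuous_on_const] .
  then have "(\<Inter>n. K n \<inter> {x. f x = y}) \<noteq> {}"
    using compact decreasing y by (intro decreasing_compact_Inter_nonempty) auto
  then show "y \<in> f ` (\<Inter>n. K n)" by blast
qed

lemma right_combs_empty [simp]: "right_combs {} K = {0}"
  by (auto simp: right_combs_def)

lemma right_combs_insert:
  assumes "finite G" "g \<notin> G"
  shows "right_combs (insert g G) K = (\<lambda>p. g * fst p + snd p) ` (K \<times> right_combs G K)"
proof
  show "right_combs (insert g G) K \<subseteq> (\<lambda>p. g * fst p + snd p) ` (K \<times> right_combs G K)"
  proof
    fix x assume "x \<in> right_combs (insert g G) K"
    then obtain z where z: "\<forall>h\<in>insert g G. z h \<in> K" "x = (\<Sum>h\<in>insert g G. h * z h)"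
      unfolding right_combs_def by blast
    then have "x = g * z g + (\<Sum>h\<in>G. h * z h)" using assms by simp
    moreover have "(\<Sum>h\<in>G. h * z h) \<in> right_combs G K" unfolding right_combs_def using z(1) by auto
    ultimately show "x \<in> (\<lambda>p. g * fst p + snd p) ` (K \<times> right_combs G K)"
      using z(1) by (intro image_eqI[of _ _ "(z g, \<Sum>h\<in>G. h * z h)"]) auto
  qed
  show "(\<lambda>p. g * fst p + snd p) ` (K \<times> right_combs G K) \<subseteq> right_combs (insert g G) K"
  proof clarify
    fix k b assume kb: "k \<in> K" "b \<in> right_combs G K"
    obtain z where z: "\<forall>h\<in>G. z h \<in> K" "b = (\<Sum>h\<in>G. h * z h)"
      using kb(2) unfolding right_combs_def by blast
    have "(\<Sum>h\<in>G. h * (z(g := k)) h) = (\<Sum>h\<in>G. h * z h)"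
      using assms(2) by (intro sum.cong) auto
    then have "(\<Sum>h\<in>G. h * (z(g := k)) h) = b" using z(2) by simp
    then have "g * k + b = (\<Sum>h\<in>insert g G. h * (z(g := k)) h)" using assms by simp
    moreover have "\<forall>h\<in>insert g G. (z(g := k)) h \<in> K" using z(1) kb(1) by simp
    ultimately show "g * fst (k, b) + snd (k, b) \<in> right_combs (insert g G) K"
      unfolding right_combs_def by (intro CollectI exI[of _ "z(g := k)"] conjI) simp_all
  qed
qed

lemma right_combs_mono: "K \<subseteq> K' \<Longrightarrow> right_combs G K \<subseteq> right_combs G K'"
  unfolding right_combs_def by blast

lemma continuous_on_mult_add:
  fixes g :: "'r::{ring_1, topological_ab_group_add, topological_semigroup_mult, t2_space}"
  shows "continuous_on UNIV (\<lambda>p::'r \<times> 'r. g * fst p + snd p)"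
  by (intro continuous_intros)

lemma compact_right_combs:
  fixes K :: "'r::{ring_1, topological_ab_group_add, topological_semigroup_mult, t2_space} set"
  assumes "finite G" "compact K"
  shows "compact (right_combs G K)"
  using assms(1)
proof (induction G rule: finite_induct)
  case (insert g G)
  then show ?case unfolding right_combs_insert[OF insert(1,2)]
    by (intro compact_continuous_image continuous_on_subset[OF continuous_on_mult_add]
        compact_Times assms(2)) auto
qed simp

lemma right_combs_Inter:
  fixes K :: "nat \<Rightarrow> 'r::{ring_1, topological_ab_group_add, topological_semigroup_mult, t2_space} set"
  assumes "finite G" and compact: "\<And>n. compact (K n)" and decreasing: "\<And>n. K (Suc n) \<subseteq> K n"
  shows "(\<Inter>n. right_combs G (K n)) \<subseteq> right_combs G (\<Inter>n. K n)"
  using assms(1)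
proof (induction G rule: finite_induct)
  case (insert g G)
  let ?f = "\<lambda>p::'r \<times> 'r. g * fst p + snd p"
  have "(\<Inter>n. right_combs (insert g G) (K n)) = (\<Inter>n. ?f ` (K n \<times> right_combs G (K n)))"
    by (simp add: right_combs_insert[OF insert(1,2)])
  also have "\<dots> \<subseteq> ?f ` (\<Inter>n. K n \<times> right_combs G (K n))"
    using compact compact_right_combs[OF insert(1)] decreasing right_combs_mono[OF decreasing]
    by (intro image_Inter_decreasing_compact continuous_on_mult_add compact_Times Sigma_mono) auto
  also have "\<dots> \<subseteq> ?f ` ((\<Inter>n. K n) \<times> right_combs G (\<Inter>n. K n))"
    using insert.IH by (intro image_mono) auto
  also have "\<dots> = right_combs (insert g G) (\<Inter>n. K n)"
    by (simp add: right_combs_insert[OF insert(1,2)])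
  finally show ?case .
qed simp

context
  assumes compact_UNIV: "compact (UNIV :: 'r::{ring_1, topological_ab_group_add,
      topological_semigroup_mult, t2_space} set)"
    and noetherian: "noetherian_ring TYPE('r)"
    and local_ring: "local_ring TYPE('r)"
begin

lemma compact_max_ideal_pow: "compact (max_ideal_pow j :: 'r set)"
proof -
  obtain G where "finite G" "max_ideal_pow j = right_combs G (UNIV :: 'r set)"
    using noetherian_right_ideal_finitely_generated[OF noetherian
        right_ideal_max_ideal_pow[OF local_ring]] by blast
  then show ?thesis using compact_right_combs compact_UNIV by simp
qed

lemma closed_max_ideal: "closed (max_ideal :: 'r set)"
  using compact_imp_closed[OF compact_max_ideal_pow[of 1]] unfolding max_ideal_pow_one[OF local_ring] .

lemma max_ideal_pow_Suc_subset_right_combs: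
  assumes gens: "(max_ideal :: 'r set) = right_combs Gm UNIV"
  shows "max_ideal_pow (Suc j) \<subseteq> right_combs Gm (max_ideal_pow j)"
proof
  fix a :: 'r assume "a \<in> max_ideal_pow (Suc j)"
  then have "a \<in> regular.max_ideal_scale (max_ideal_pow j)" by simp
  then show "a \<in> right_combs Gm (max_ideal_pow j)"
  proof (induction a rule: regular.max_ideal_scale.induct)
    case zero
    show ?case unfolding right_combs_def
      using regular.submodule_zero[OF regular_is_submodule_max_ideal_pow[OF local_ring]]
      by (intro CollectI exI[of _ "\<lambda>_. 0"]) simp
  next
    case (scale_add x y s)
    obtain c where c: "x = (\<Sum>g\<in>Gm. g * c g)"
      using scale_add.hyps(1) gens unfolding right_combs_def by blast
    obtain z where z: "\<forall>g\<in>Gm. z g \<in> max_ideal_pow j" "s = (\<Sum>g\<in>Gm. g * z g)"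
      using scale_add.IH unfolding right_combs_def by blast
    have "x * y + s = (\<Sum>g\<in>Gm. g * (c g * y + z g))"
      unfolding c z by (simp add: sum_distrib_right sum.distrib distrib_left mult.assoc)
    moreover have "\<forall>g\<in>Gm. c g * y + z g \<in> max_ideal_pow j"
      using scale_add.hyps(2) z(1) left_ideal_max_ideal_pow[OF local_ring, of j]
      by (simp add: left_ideal_def)
    ultimately show ?case
      unfolding right_combs_def by (auto intro!: exI[of _ "\<lambda>g. c g * y + z g"])
  qed
qed

text \<open>With \<open>G\<close> a finite set of right generators of \<open>m\<close>, every
  element of \<open>J = \<Inter>j. m\<^sup>j\<close> lies in each \<open>m\<^sup>j\<^sup>+\<^sup>1 \<subseteq> G m\<^sup>j\<close>; compactness moves the
  intersection inside, so \<open>J \<subseteq> G J \<subseteq> m J\<close>, and Nakayama's lemma gives \<open>J = 0\<close>.\<close>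

theorem Inter_max_ideal_pow: "(\<Inter>j. max_ideal_pow j) = ({0} :: 'r set)"
proof -
  define J where "J = (\<Inter>j. max_ideal_pow j :: 'r set)"
  obtain Gm where Gm: "finite Gm" "Gm \<subseteq> max_ideal" "(max_ideal :: 'r set) = right_combs Gm UNIV"
    using noetherian_right_ideal_finitely_generated[OF noetherian right_ideal_max_ideal[OF local_ring]]
    by blast
  have "left_ideal J"
    unfolding left_ideal_def J_def
    using regular.submodule_zero[OF regular_is_submodule_max_ideal_pow[OF local_ring]]
      regular.submodule_add[OF regular_is_submodule_max_ideal_pow[OF local_ring]]
      regular.submodule_scale[OF regular_is_submodule_max_ideal_pow[OF local_ring]]
    by auto
  then obtain H where H: "finite H" "J = regular.span H"
    using noetherian_left_ideal_finitely_generated[OF noetherian] by blast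
  have "J \<subseteq> (\<Inter>j. right_combs Gm (max_ideal_pow j))"
    using max_ideal_pow_Suc_subset_right_combs[OF Gm(3)] unfolding J_def by blast
  also have "\<dots> \<subseteq> right_combs Gm J"
    unfolding J_def using Gm(1) compact_max_ideal_pow max_ideal_pow_Suc_subset
    by (rule right_combs_Inter)
  also have "\<dots> \<subseteq> regular.max_ideal_scale J"
    unfolding right_combs_def using Gm(2)
    by (auto intro!: regular.max_ideal_scale_sum regular.max_ideal_scale_single)
  also have "\<dots> \<subseteq> {0} + regular.max_ideal_scale J"
    by (simp add: set_zero_plus2)
  finally have "J \<subseteq> {0}"
    unfolding H(2) by (rule regular.nakayama[OF local_ring H(1), rotated])
      (simp add: regular.is_submodule_def)
  moreover have "0 \<in> J"
    unfolding J_def using regular.submodule_zero[OF regular_is_submodule_max_ideal_pow[OF local_ring]]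
    by blast
  ultimately show ?thesis unfolding J_def by blast
qed

lemma max_ideal_pow_subset_open:
  assumes "open U" "(0::'r) \<in> U"
  shows "\<exists>j. max_ideal_pow j \<subseteq> U"
proof (rule ccontr)
  assume "\<not> ?thesis"
  then have "(\<Inter>j. max_ideal_pow j - U) \<noteq> {}"
    using compact_max_ideal_pow \<open>open U\<close> max_ideal_pow_Suc_subset
    by (intro decreasing_compact_Inter_nonempty) (auto simp: Diff_eq compact_Int_closed open_closed)
  then show False using Inter_max_ideal_pow \<open>0 \<in> U\<close> by auto
qed

text \<open>The cosets \<open>P (j + i) + m\<^sup>j\<close> are compact and decreasing, so they have a common point.\<close>

lemma max_ideal_pow_limit:
  fixes P :: "nat \<Rightarrow> 'r"
  assumes cauchy: "\<And>j N. j + i \<le> N \<Longrightarrow> P N - P (j + i) \<in> max_ideal_pow j"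
  shows "\<exists>S. \<forall>j N. j + i \<le> N \<longrightarrow> P N - S \<in> max_ideal_pow j"
proof -
  note ideal = regular_is_submodule_max_ideal_pow[OF local_ring]
  define K where "K j = (\<lambda>y. P (j + i) + y) ` max_ideal_pow j" for j
  have "(\<Inter>j. K j) \<noteq> {}"
  proof (rule decreasing_compact_Inter_nonempty)
    show "compact (K j)" for j
      unfolding K_def by (intro compact_continuous_image compact_max_ideal_pow continuous_intros)
    show "K j \<noteq> {}" for j unfolding K_def using regular.submodule_zero[OF ideal, of j] by blast
    show "K (Suc j) \<subseteq> K j" for j
    proof
      fix x assume "x \<in> K (Suc j)"
      then obtain z where z: "z \<in> max_ideal_pow (Suc j)" "x = P (Suc j + i) + z"
        unfolding K_def by blast
      have "x = P (j + i) + ((P (Suc j + i) - P (j + i)) + z)" using z(2) by simp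
      moreover have "(P (Suc j + i) - P (j + i)) + z \<in> max_ideal_pow j"
        using cauchy[of j "Suc j + i"] z(1) max_ideal_pow_Suc_subset[of j]
        by (intro regular.submodule_add[OF ideal]) auto
      ultimately show "x \<in> K j" unfolding K_def by blast
    qed
  qed
  then obtain S where S: "\<And>j. S \<in> K j" by blast
  have "P N - S \<in> max_ideal_pow j" if "j + i \<le> N" for N j
  proof -
    obtain z where z: "z \<in> max_ideal_pow j" "S = P (j + i) + z" using S[of j] unfolding K_def by blast
    have "P N - S = (P N - P (j + i)) - z" using z(2) by simp
    also have "\<dots> \<in> max_ideal_pow j" by (rule regular.submodule_diff[OF ideal cauchy[OF that] z(1)])
    finally show ?thesis .
  qed
  then show ?thesis by blast
qed

lemma tendsto_if_in_max_ideal_pow: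
  fixes f :: "'a \<Rightarrow> 'r"
  assumes "\<And>j. \<forall>\<^sub>F x in F. f x - S \<in> max_ideal_pow j"
  shows "(f \<longlongrightarrow> S) F"
proof (rule topological_tendstoI)
  fix U assume "open U" "S \<in> U"
  then have "open ((\<lambda>y. y + S) -` U)" "0 \<in> (\<lambda>y. y + S) -` U"
    by (auto intro!: open_vimage continuous_intros)
  then obtain j where j: "max_ideal_pow j \<subseteq> (\<lambda>y. y + S) -` U"
    using max_ideal_pow_subset_open by blast
  show "\<forall>\<^sub>F x in F. f x \<in> U"
    using assms[of j] by (rule eventually_mono) (use j in auto)
qed

lemma summable_if_in_max_ideal_pow:
  fixes t :: "nat \<Rightarrow> 'r"
  assumes t: "\<And>n. t n \<in> max_ideal_pow (n - i)"
  shows "summable t"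
proof -
  define P where "P N = (\<Sum>n<N. t n)" for N
  have "P N - P (j + i) \<in> max_ideal_pow j" if "j + i \<le> N" for N j
  proof -
    have "P N = P (j + i) + (\<Sum>n\<in>{j + i..<N}. t n)"
      unfolding P_def using sum.atLeastLessThan_concat[of 0 "j + i" N t] that
      by (simp add: atLeast0LessThan)
    then have "P N - P (j + i) = (\<Sum>n\<in>{j + i..<N}. t n)" by simp
    also have "\<dots> \<in> max_ideal_pow j"
    proof (intro regular.submodule_sum[OF regular_is_submodule_max_ideal_pow[OF local_ring]])
      fix n assume "n \<in> {j + i..<N}"
      then have "max_ideal_pow (n - i) \<subseteq> max_ideal_pow j" by (intro max_ideal_pow_antimono) auto
      then show "t n \<in> max_ideal_pow j" using t[of n] by blast
    qed
    finally show ?thesis .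
  qed
  then obtain S where S: "\<And>j N. j + i \<le> N \<Longrightarrow> P N - S \<in> max_ideal_pow j"
    using max_ideal_pow_limit by blast
  have "P \<longlonglongrightarrow> S"
    using S by (intro tendsto_if_in_max_ideal_pow eventually_sequentiallyI) blast
  then show ?thesis unfolding summable_def sums_def P_def by blast
qed

lemma suminf_in_max_ideal:
  fixes t :: "nat \<Rightarrow> 'r"
  assumes "\<And>n. t n \<in> max_ideal_pow (n - i)" and "\<And>n. t n \<in> max_ideal"
  shows "suminf t \<in> max_ideal"
proof (rule Lim_in_closed_set[OF closed_max_ideal])
  show "(\<lambda>N. \<Sum>n<N. t n) \<longlonglongrightarrow> suminf t"
    using summable_LIMSEQ[OF summable_if_in_max_ideal_pow[OF assms(1)]] .
  show "\<forall>\<^sub>F N in sequentially. (\<Sum>n<N. t n) \<in> max_ideal"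
    using assms(2) by (simp add: max_ideal_sum[OF local_ring])
qed simp

lemma closed_units: "closed {x::'r. is_unit x}"
proof -
  define Z where "Z = {p :: 'r \<times> 'r. fst p * snd p = 1 \<and> snd p * fst p = 1}"
  have "closed Z" unfolding Z_def
    by (intro closed_Collect_conj closed_Collect_eq continuous_intros)
  then have "compact Z" using compact_Times[OF compact_UNIV compact_UNIV]
    by (simp add: compact_Int_closed[of UNIV Z, simplified])
  then have "compact (fst ` Z)" by (intro compact_continuous_image continuous_intros)
  moreover have "fst ` Z = {x. is_unit x}"
  proof
    show "fst ` Z \<subseteq> {x. is_unit x}" unfolding Z_def is_unit_def by auto
    show "{x. is_unit x} \<subseteq> fst ` Z"
    proof
      fix x assume "x \<in> {x::'r. is_unit x}"
      then obtain y where "(x, y) \<in> Z" unfolding Z_def is_unit_def by auto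
      then show "x \<in> fst ` Z" by (rule rev_image_eqI) simp
    qed
  qed
  ultimately show ?thesis using compact_imp_closed by metis
qed

lemma finite_residue_representatives: "\<exists>E. finite E \<and> (\<forall>r::'r. \<exists>e\<in>E. r - e \<in> max_ideal)"
proof -
  have "open (max_ideal :: 'r set)"
    using closed_units unfolding open_closed max_ideal_def by (simp add: Compl_eq)
  then have "open ((\<lambda>y. y - e) -` (max_ideal :: 'r set))" for e
    by (intro open_vimage continuous_intros)
  moreover have "UNIV \<subseteq> (\<Union>e. (\<lambda>y. y - e) -` (max_ideal :: 'r set))"
    using zero_in_max_ideal[OF local_ring] by auto
  ultimately obtain E where "finite E" "UNIV \<subseteq> (\<Union>e\<in>E. (\<lambda>y. y - e) -` (max_ideal :: 'r set))"
    by (rule compactE_image[OF compact_UNIV, of UNIV]) auto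
  then show ?thesis by blast
qed

end

section \<open>Skew derivations and the coefficients of \<open>Y\<^sup>n r\<close>\<close>

locale skew_ring =
  fixes \<sigma> \<delta> :: "'r::ring_1 \<Rightarrow> 'r"
  assumes sigma_aut: "ring_automorphism \<sigma>"
    and delta_der: "sigma_derivation \<sigma> \<delta>"
begin

lemma sigma_add: "\<sigma> (x + y) = \<sigma> x + \<sigma> y"
  using sigma_aut by (simp add: ring_automorphism_def)

lemma sigma_mult: "\<sigma> (x * y) = \<sigma> x * \<sigma> y"
  using sigma_aut by (simp add: ring_automorphism_def)

lemma sigma_one [simp]: "\<sigma> 1 = 1"
  using sigma_aut by (simp add: ring_automorphism_def)

lemma sigma_zero [simp]: "\<sigma> 0 = 0"
  using sigma_add[of 0 0] by simp

lemma sigma_minus: "\<sigma> (- x) = - \<sigma> x"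
  using sigma_add[of x "- x"] add.inverse_unique[of "\<sigma> x" "\<sigma> (- x)"] by simp

lemma delta_add: "\<delta> (x + y) = \<delta> x + \<delta> y"
  using delta_der by (simp add: sigma_derivation_def)

lemma delta_mult: "\<delta> (x * y) = \<delta> x * y + \<sigma> x * \<delta> y"
  using delta_der by (simp add: sigma_derivation_def)

lemma delta_zero [simp]: "\<delta> 0 = 0"
  using delta_add[of 0 0] by simp

lemma delta_minus: "\<delta> (- x) = - \<delta> x"
  using delta_add[of x "- x"] add.inverse_unique[of "\<delta> x" "\<delta> (- x)"] by simp

lemma delta_one [simp]: "\<delta> 1 = 0"
  using delta_mult[of 1 1] by simp

lemma skew_coeff_zero [simp]: "skew_coeff \<sigma> \<delta> n i 0 = 0"
proof (induction n arbitrary: i)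
  case (Suc n)
  then show ?case by (cases i) simp_all
qed simp

lemma skew_coeff_constant:
  "\<sigma> r = r \<Longrightarrow> \<delta> r = 0 \<Longrightarrow> skew_coeff \<sigma> \<delta> n i r = (if i = n then r else 0)"
proof (induction n arbitrary: i)
  case (Suc n)
  then show ?case by (cases i) simp_all
qed simp

end

locale filtered_skew_ring = skew_ring \<sigma> \<delta> for \<sigma> \<delta> :: "'r::ring_1 \<Rightarrow> 'r" +
  assumes local_ring: "local_ring TYPE('r)"
    and sigma_max_ideal: "\<sigma> ` max_ideal = max_ideal"
    and delta_range: "range \<delta> \<subseteq> max_ideal"
    and delta_max_ideal: "\<delta> ` max_ideal \<subseteq> ideal_sq max_ideal"
begin

lemma sigma_max_ideal_pow: "x \<in> max_ideal_pow j \<Longrightarrow> \<sigma> x \<in> max_ideal_pow j"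
proof (induction j arbitrary: x)
  case (Suc j)
  from Suc.prems have "x \<in> regular.max_ideal_scale (max_ideal_pow j)" by simp
  then have "\<sigma> x \<in> regular.max_ideal_scale (max_ideal_pow j)"
  proof (induction x rule: regular.max_ideal_scale.induct)
    case zero
    then show ?case by (simp add: regular.max_ideal_scale.zero)
  next
    case (scale_add a w s)
    then have "\<sigma> a \<in> max_ideal" using sigma_max_ideal by blast
    then show ?case
      using scale_add Suc.IH by (simp add: sigma_add sigma_mult regular.max_ideal_scale.scale_add)
  qed
  then show ?case by simp
qed simp

lemma delta_max_ideal_pow: "x \<in> max_ideal_pow j \<Longrightarrow> \<delta> x \<in> max_ideal_pow (Suc j)"
proof (induction j arbitrary: x)
  case 0
  then show ?case using delta_range max_ideal_pow_one[OF local_ring] by auto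
next
  case (Suc j)
  note ideal = regular_is_submodule_max_ideal_pow[OF local_ring]
  from Suc.prems have "x \<in> regular.max_ideal_scale (max_ideal_pow j)" by simp
  then show ?case
  proof (induction x rule: regular.max_ideal_scale.induct)
    case zero
    show ?case using regular.submodule_zero[OF ideal] by (simp del: max_ideal_pow.simps)
  next
    case (scale_add a w s)
    have "\<delta> a \<in> max_ideal_pow 2"
      using scale_add.hyps(1) delta_max_ideal ideal_sq_subset_max_ideal_pow_2[OF local_ring] by blast
    then have "\<delta> a * w \<in> max_ideal_pow (Suc (Suc j))"
      using max_ideal_pow_mult[OF local_ring _ scale_add.hyps(2)] by fastforce
    moreover have "\<sigma> a \<in> max_ideal_pow 1"
      using scale_add.hyps(1) sigma_max_ideal max_ideal_pow_one[OF local_ring] by blast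
    then have "\<sigma> a * \<delta> w \<in> max_ideal_pow (Suc (Suc j))"
      using max_ideal_pow_mult[OF local_ring _ Suc.IH[OF scale_add.hyps(2)]] by fastforce
    ultimately have "\<delta> a * w + \<sigma> a * \<delta> w \<in> max_ideal_pow (Suc (Suc j))"
      by (rule regular.submodule_add[OF ideal])
    then show ?case using regular.submodule_add[OF ideal _ scale_add.IH]
      by (simp add: delta_add delta_mult del: max_ideal_pow.simps)
  qed
qed

text \<open>This is where the hypotheses on \<open>\<delta>\<close> enter; it makes the series defining \<open>sps_mult\<close>
  converge.\<close>

lemma skew_coeff_in_max_ideal_pow: "skew_coeff \<sigma> \<delta> n i r \<in> max_ideal_pow (n - i)"
proof (induction n arbitrary: i)
  case (Suc n)
  note ideal = regular_is_submodule_max_ideal_pow[OF local_ring]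
  have "max_ideal_pow (Suc (n - i)) \<subseteq> max_ideal_pow (Suc n - i)"
    by (rule max_ideal_pow_antimono) simp
  then have "\<delta> (skew_coeff \<sigma> \<delta> n i r) \<in> max_ideal_pow (Suc n - i)"
    using delta_max_ideal_pow[OF Suc.IH[of i]] by blast
  moreover have "\<sigma> (skew_coeff \<sigma> \<delta> n j r) \<in> max_ideal_pow (Suc n - i)" if "i = Suc j" for j
    using sigma_max_ideal_pow[OF Suc.IH[of j]] that by simp
  ultimately show ?case
    by (cases i) (simp_all add: regular.submodule_add[OF ideal])
qed simp

lemma skew_coeff_in_max_ideal: "r \<in> max_ideal \<Longrightarrow> skew_coeff \<sigma> \<delta> n i r \<in> max_ideal"
proof (induction n arbitrary: i)
  case (Suc n)
  have "\<delta> (skew_coeff \<sigma> \<delta> n i r) \<in> max_ideal" using delta_range by blast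
  moreover have "\<sigma> (skew_coeff \<sigma> \<delta> n j r) \<in> max_ideal" for j
    using Suc.IH[OF Suc.prems] sigma_max_ideal by blast
  ultimately show ?case
    by (cases i) (simp_all add: max_ideal_add[OF local_ring])
qed (simp add: zero_in_max_ideal[OF local_ring])

end

section \<open>Skew power series\<close>

definition sps_Y_pow :: "nat \<Rightarrow> 'r::ring_1 sps" where
  "sps_Y_pow p = (\<lambda>n. if n = p then 1 else 0)"

definition sps_trunc :: "nat \<Rightarrow> 'r::ring_1 sps \<Rightarrow> 'r sps" where
  "sps_trunc K a = (\<lambda>n. if n < K then a n else 0)"

definition sps_shift :: "nat \<Rightarrow> 'r::ring_1 sps \<Rightarrow> 'r sps" where
  "sps_shift K a = (\<lambda>n. a (n + K))"

definition sps_one_minus_Y_pow :: "nat \<Rightarrow> 'r::ring_1 sps" where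
  "sps_one_minus_Y_pow p = (\<lambda>n. (if n = 0 then 1 else 0) - (if n = p then 1 else 0))"

definition sps_geometric :: "nat \<Rightarrow> 'r::ring_1 sps" where
  "sps_geometric p = (\<lambda>n. if p dvd n then 1 else 0)"

lemma is_skew_poly_trunc: "is_skew_poly (sps_trunc K a)"
  unfolding is_skew_poly_def sps_trunc_def by (rule finite_subset[of _ "{..<K}"]) auto

lemma is_skew_poly_const: "is_skew_poly (sps_const r)"
  unfolding is_skew_poly_def sps_const_def by (rule finite_subset[of _ "{0}"]) auto

lemma sps_const_add: "sps_const (r + s) = sps_add (sps_const r) (sps_const s)"
  by (auto simp: sps_const_def sps_add_def)

lemma sps_const_one: "sps_const 1 = sps_one"
  by (auto simp: sps_const_def sps_one_def)

lemma sps_const_zero: "sps_const 0 = (\<lambda>_. 0)"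
  by (auto simp: sps_const_def)

lemma sps_Y_pow_0: "sps_Y_pow 0 = sps_one"
  by (auto simp: sps_Y_pow_def sps_one_def)

locale skew_series = skew_ring \<sigma> \<delta> for \<sigma> \<delta> :: "'r::{ring_1, topological_ab_group_add, t2_space} \<Rightarrow> 'r"
begin

lemma sps_mult_const_left: "sps_mult \<sigma> \<delta> (sps_const r) b = (\<lambda>k. r * b k)"
proof
  fix k
  have "(\<Sum>n. sps_const r n * skew_coeff \<sigma> \<delta> n (k - m) (b m)) = (if m = k then r * b k else 0)"
    if "m \<le> k" for m
    using that suminf_finite[of "{0}" "\<lambda>n. sps_const r n * skew_coeff \<sigma> \<delta> n (k - m) (b m)"]
    by (simp add: sps_const_def)
  then show "sps_mult \<sigma> \<delta> (sps_const r) b k = r * b k"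
    unfolding sps_mult_def by simp
qed

lemma sps_mult_const_right: "sps_mult \<sigma> \<delta> a (sps_const r) = (\<lambda>k. \<Sum>n. a n * skew_coeff \<sigma> \<delta> n k r)"
proof
  fix k
  have "(\<Sum>n. a n * skew_coeff \<sigma> \<delta> n (k - m) (sps_const r m))
      = (if m = 0 then (\<Sum>n. a n * skew_coeff \<sigma> \<delta> n k r) else 0)" for m
    by (simp add: sps_const_def)
  then show "sps_mult \<sigma> \<delta> a (sps_const r) k = (\<Sum>n. a n * skew_coeff \<sigma> \<delta> n k r)"
    unfolding sps_mult_def by simp
qed

lemma sps_mult_constant_coeffs:
  assumes "\<And>m. \<sigma> (b m) = b m" "\<And>m. \<delta> (b m) = 0"
  shows "sps_mult \<sigma> \<delta> a b = (\<lambda>k. \<Sum>m\<le>k. a (k - m) * b m)"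
proof
  fix k
  have "(\<Sum>n. a n * skew_coeff \<sigma> \<delta> n (k - m) (b m)) = a (k - m) * b m" for m
    using suminf_finite[of "{k - m}" "\<lambda>n. a n * skew_coeff \<sigma> \<delta> n (k - m) (b m)"]
    by (simp add: skew_coeff_constant assms)
  then show "sps_mult \<sigma> \<delta> a b k = (\<Sum>m\<le>k. a (k - m) * b m)"
    unfolding sps_mult_def by simp
qed

lemma sps_mult_Y_pow_right: "sps_mult \<sigma> \<delta> a (sps_Y_pow p) = (\<lambda>k. if p \<le> k then a (k - p) else 0)"
  by (subst sps_mult_constant_coeffs) (auto simp: sps_Y_pow_def if_distrib[of "(*) _"] cong: if_cong)

lemma sps_Y_pow_Suc: "sps_Y_pow (Suc p) = sps_mult \<sigma> \<delta> (sps_Y_pow p) (sps_Y_pow 1)"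
  unfolding sps_mult_Y_pow_right by (auto simp: sps_Y_pow_def fun_eq_iff)

lemma sps_trunc_shift: "a = sps_add (sps_trunc K a) (sps_mult \<sigma> \<delta> (sps_shift K a) (sps_Y_pow K))"
  unfolding sps_mult_Y_pow_right by (auto simp: sps_add_def sps_trunc_def sps_shift_def)

lemma sps_one_minus_Y_pow_eq:
  "sps_one_minus_Y_pow p = sps_add sps_one (sps_mult \<sigma> \<delta> (sps_const (- 1)) (sps_Y_pow p))"
  unfolding sps_mult_const_left by (auto simp: sps_one_minus_Y_pow_def sps_add_def sps_one_def sps_Y_pow_def)

lemma sps_geometric_mult_one_minus_Y_pow:
  assumes "0 < p"
  shows "sps_mult \<sigma> \<delta> (sps_geometric p) (sps_one_minus_Y_pow p) = sps_one"
proof -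
  have "sps_mult \<sigma> \<delta> (sps_geometric p) (sps_one_minus_Y_pow p) =
      (\<lambda>k. \<Sum>m\<le>k. sps_geometric p (k - m) * sps_one_minus_Y_pow p m)"
    by (rule sps_mult_constant_coeffs) (auto simp: sps_one_minus_Y_pow_def sigma_minus delta_minus)
  also have "\<dots> = (\<lambda>k. sps_geometric p k - (if p \<le> k then sps_geometric p (k - p) else 0))"
  proof
    fix k
    have "(\<Sum>m\<le>k. sps_geometric p (k - m) * sps_one_minus_Y_pow p m)
        = (\<Sum>m\<le>k. (if m = 0 then sps_geometric p (k - m) else 0)
                    - (if m = p then sps_geometric p (k - m) else 0))"
      by (intro sum.cong) (auto simp: sps_one_minus_Y_pow_def)
    then show "(\<Sum>m\<le>k. sps_geometric p (k - m) * sps_one_minus_Y_pow p m)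
        = sps_geometric p k - (if p \<le> k then sps_geometric p (k - p) else 0)"
      by (simp add: sum_subtractf)
  qed
  also have "\<dots> = sps_one"
  proof
    fix k
    have "p dvd k \<longleftrightarrow> p dvd (k - p)" if "p \<le> k" using that dvd_minus_self by auto
    moreover have "\<not> p dvd k" if "\<not> p \<le> k" "k \<noteq> 0" using that by (auto dest: dvd_imp_le)
    ultimately show "sps_geometric p k - (if p \<le> k then sps_geometric p (k - p) else 0) = sps_one k"
      using assms by (auto simp: sps_geometric_def sps_one_def)
  qed
  finally show ?thesis .
qed

end

context left_module
begin

lemma finite_representatives_mod_max_ideal_scale:
  fixes E0 :: "'r set"
  assumes E0: "finite E0" "\<And>r. \<exists>e\<in>E0. r - e \<in> max_ideal" and G: "finite G"
  shows "\<exists>E. finite E \<and> E \<subseteq> span G \<and> (\<forall>w\<in>span G. \<exists>e\<in>E. w - e \<in> max_ideal_scale (span G))"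
proof (intro exI conjI ballI)
  define comb where "comb c = (\<Sum>g\<in>G. c g *s g)" for c :: "'m \<Rightarrow> 'r"
  show "finite (comb ` (G \<rightarrow>\<^sub>E E0))" using G E0(1) by (intro finite_imageI finite_PiE) auto
  show "comb ` (G \<rightarrow>\<^sub>E E0) \<subseteq> span G" unfolding comb_def span_def by blast
  fix w assume "w \<in> span G"
  then obtain c where c: "w = comb c" unfolding span_def comb_def by blast
  have "\<forall>g. \<exists>e. e \<in> E0 \<and> c g - e \<in> max_ideal" using E0(2) by blast
  from choice[OF this] obtain \<epsilon> where \<epsilon>: "\<And>g. \<epsilon> g \<in> E0 \<and> c g - \<epsilon> g \<in> max_ideal" by blast
  have "comb (restrict \<epsilon> G) \<in> comb ` (G \<rightarrow>\<^sub>E E0)" using \<epsilon> by auto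
  moreover have "w - comb (restrict \<epsilon> G) = (\<Sum>g\<in>G. (c g - \<epsilon> g) *s g)"
    unfolding c comb_def by (simp add: sum_subtractf scale_left_diff_distrib)
  moreover have "\<dots> \<in> max_ideal_scale (span G)"
    using \<epsilon> span_superset[OF G] by (intro max_ideal_scale_sum max_ideal_scale_single) auto
  ultimately show "\<exists>e\<in>comb ` (G \<rightarrow>\<^sub>E E0). w - e \<in> max_ideal_scale (span G)" by metis
qed

end

text \<open>Pigeonhole on the finitely many maps \<open>E \<rightarrow> Pow E\<close> recording the cosets met by \<open>T\<^sup>n e\<close>.\<close>

lemma funpow_eventually_periodic_modulo:
  fixes T :: "'a::ab_group_add \<Rightarrow> 'a"
  assumes U: "0 \<in> U" "\<And>x y. x \<in> U \<Longrightarrow> y \<in> U \<Longrightarrow> x - y \<in> U"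
    and T_diff: "\<And>x y. T (x - y) = T x - T y"
    and T_U: "\<And>x. x \<in> U \<Longrightarrow> T x \<in> U" and T_W: "\<And>w. w \<in> W \<Longrightarrow> T w \<in> W"
    and E: "finite E" "E \<subseteq> W" "\<And>w. w \<in> W \<Longrightarrow> \<exists>e\<in>E. w - e \<in> U"
  shows "\<exists>K p. 0 < p \<and> (\<forall>w\<in>W. (T ^^ (K + p)) w - (T ^^ K) w \<in> U)"
proof -
  have U_add: "x + y \<in> U" if "x \<in> U" "y \<in> U" for x y
    using U(2)[OF that(1) U(2)[OF U(1) that(2)]] by simp
  have Tn_diff: "(T ^^ n) (x - y) = (T ^^ n) x - (T ^^ n) y" for n x y
    by (induction n) (simp_all add: T_diff)
  have Tn_U: "(T ^^ n) x \<in> U" if "x \<in> U" for n x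
    using that by (induction n) (simp_all add: T_U)
  have Tn_W: "(T ^^ n) w \<in> W" if "w \<in> W" for n w
    using that by (induction n) (simp_all add: T_W)
  define cls where "cls n = restrict (\<lambda>e. {e' \<in> E. (T ^^ n) e - e' \<in> U}) E" for n
  have "range cls \<subseteq> E \<rightarrow>\<^sub>E Pow E" unfolding cls_def by auto
  moreover have "finite (E \<rightarrow>\<^sub>E Pow E)" using E(1) by (intro finite_PiE) auto
  ultimately have "finite (range cls)" by (rule finite_subset)
  then have "\<not> inj cls" using finite_imageD[of cls UNIV] by auto
  then obtain i j where ij: "i < j" "cls i = cls j"
    unfolding inj_def by (metis linorder_neqE_nat)
  have period: "(T ^^ j) e - (T ^^ i) e \<in> U" if "e \<in> E" for e
  proof -
    have "e \<in> W" using E(2) that by blast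
    then obtain e' where e': "e' \<in> E" "(T ^^ i) e - e' \<in> U"
      using E(3)[OF Tn_W[of e i]] by blast
    then have "e' \<in> cls j e" using ij(2)[symmetric] that by (simp add: cls_def)
    then have "(T ^^ j) e - e' \<in> U" using that by (simp add: cls_def)
    from U(2)[OF this e'(2)] show ?thesis by simp
  qed
  show ?thesis
  proof (intro exI conjI ballI)
    show "0 < j - i" using ij(1) by simp
    fix w assume "w \<in> W"
    then obtain e where e: "e \<in> E" "w - e \<in> U" using E(3) by blast
    have "(T ^^ j) w - (T ^^ i) w
        = ((T ^^ j) (w - e) - (T ^^ i) (w - e)) + ((T ^^ j) e - (T ^^ i) e)"
      by (simp add: Tn_diff)
    also have "\<dots> \<in> U" using U(2) U_add Tn_U e period by simp
    finally show "(T ^^ (i + (j - i))) w - (T ^^ i) w \<in> U" using ij(1) by simp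
  qed
qed

section \<open>Modules over the skew power series ring\<close>

lemma sps_module_act_zero:
  assumes "sps_module \<sigma> \<delta> P act" "P a"
  shows "act a 0 = 0"
proof -
  have "act a (0 + 0) = act a 0 + act a 0" using assms unfolding sps_module_def by blast
  then show ?thesis by simp
qed

locale skew_module = filtered_skew_ring \<sigma> \<delta> + skew_series \<sigma> \<delta>
  for \<sigma> \<delta> :: "'r::{ring_1, topological_ab_group_add, topological_semigroup_mult, t2_space} \<Rightarrow> 'r" +
  fixes act :: "'r sps \<Rightarrow> 'm::ab_group_add \<Rightarrow> 'm"
  assumes compact_UNIV: "compact (UNIV :: 'r set)"
    and noetherian: "noetherian_ring TYPE('r)"
    and module: "sps_module \<sigma> \<delta> (\<lambda>_. True) act"
begin

lemma act_add: "act (sps_add a b) x = act a x + act b x"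
  using module by (simp add: sps_module_def)

lemma act_right_distrib: "act a (x + y) = act a x + act a y"
  using module by (simp add: sps_module_def)

lemma act_one [simp]: "act sps_one x = x"
  using module by (simp add: sps_module_def)

lemma act_mult: "act (sps_mult \<sigma> \<delta> a b) x = act a (act b x)"
  using module by (simp add: sps_module_def)

lemma act_zero_right [simp]: "act a 0 = 0"
  using sps_module_act_zero[OF module] by simp

lemma act_diff_right: "act a (x - y) = act a x - act a y"
  using act_right_distrib[of a "x - y" y] by (simp add: eq_diff_eq)

lemma act_zero_series [simp]: "act (\<lambda>_. 0) x = 0"
  using act_add[of "\<lambda>_. 0" "\<lambda>_. 0" x] by (simp add: sps_add_def)

lemma act_sum_series: "finite G \<Longrightarrow> act (\<lambda>k. \<Sum>g\<in>G. f g k) x = (\<Sum>g\<in>G. act (f g) x)"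
proof (induction G rule: finite_induct)
  case (insert g G)
  then have "(\<lambda>k. \<Sum>h\<in>insert g G. f h k) = sps_add (f g) (\<lambda>k. \<Sum>h\<in>G. f h k)"
    by (simp add: sps_add_def)
  then show ?case using insert by (simp add: act_add)
qed simp

definition act_Y :: "'m \<Rightarrow> 'm" where
  "act_Y = act (sps_Y_pow 1)"

lemma act_Y_pow: "act (sps_Y_pow p) x = (act_Y ^^ p) x"
proof (induction p arbitrary: x)
  case (Suc p)
  have "act (sps_Y_pow (Suc p)) x = act (sps_Y_pow p) (act_Y x)"
    by (simp only: sps_Y_pow_Suc act_mult act_Y_def)
  also have "\<dots> = (act_Y ^^ p) (act_Y x)" by (rule Suc.IH)
  finally show ?case by (simp only: funpow_Suc_right comp_def)
qed (simp add: sps_Y_pow_0)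

lemma act_one_minus_Y_pow: "act (sps_one_minus_Y_pow p) x = x - (act_Y ^^ p) x"
proof -
  have "act (sps_const (- 1)) y = - y" for y
  proof -
    have "act (sps_const (- 1)) y + act (sps_const 1) y = act (sps_const (- 1 + 1)) y"
      by (simp only: sps_const_add act_add)
    then have "act (sps_const (- 1)) y + y = 0" by (simp add: sps_const_one sps_const_zero)
    then show ?thesis by (simp add: eq_neg_iff_add_eq_0)
  qed
  then show ?thesis by (simp add: sps_one_minus_Y_pow_eq act_add act_mult act_Y_pow)
qed

end

sublocale skew_module \<subseteq> M: left_module "\<lambda>r. act (sps_const r)"
proof unfold_locales
  fix a b :: 'r and x y :: 'm
  show "act (sps_const a) (x + y) = act (sps_const a) x + act (sps_const a) y"
    by (rule act_right_distrib)
  show "act (sps_const (a + b)) x = act (sps_const a) x + act (sps_const b) x"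
    by (simp add: sps_const_add act_add)
  have "sps_const (a * b) = sps_mult \<sigma> \<delta> (sps_const a) (sps_const b)"
    unfolding sps_mult_const_left by (auto simp: sps_const_def)
  then show "act (sps_const a) (act (sps_const b) x) = act (sps_const (a * b)) x"
    by (simp add: act_mult)
  show "act (sps_const 1) x = x" by (simp add: sps_const_one)
qed

context skew_module
begin

text \<open>For \<open>r \<in> m\<close> all coefficients of \<open>a r\<close> lie in \<open>m\<close>, so \<open>a r = \<Sum>g. g b\<^sub>g\<close> over
  finitely many right generators \<open>g\<close> of \<open>m\<close>.\<close>

lemma act_max_ideal_scale:
  assumes stable: "\<And>b w. w \<in> W \<Longrightarrow> act b w \<in> W"
  shows "y \<in> M.max_ideal_scale W \<Longrightarrow> act a y \<in> M.max_ideal_scale W"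
proof (induction y rule: M.max_ideal_scale.induct)
  case zero
  show ?case by (simp add: M.max_ideal_scale.zero)
next
  case (scale_add r w s)
  obtain Gm where Gm: "finite Gm" "Gm \<subseteq> max_ideal" "(max_ideal :: 'r set) = right_combs Gm UNIV"
    using noetherian_right_ideal_finitely_generated[OF noetherian right_ideal_max_ideal[OF local_ring]]
    by blast
  define e where "e = sps_mult \<sigma> \<delta> a (sps_const r)"
  have "e k \<in> max_ideal" for k
    unfolding e_def sps_mult_const_right
  proof (rule suminf_in_max_ideal[OF compact_UNIV noetherian local_ring])
    show "a n * skew_coeff \<sigma> \<delta> n k r \<in> max_ideal_pow (n - k)" for n
      using skew_coeff_in_max_ideal_pow left_ideal_max_ideal_pow[OF local_ring]
      by (simp add: left_ideal_def)
    show "a n * skew_coeff \<sigma> \<delta> n k r \<in> max_ideal" for n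
      using max_ideal_mult_left[OF local_ring skew_coeff_in_max_ideal[OF scale_add.hyps(1)]] .
  qed
  then have "\<forall>k. \<exists>c. e k = (\<Sum>g\<in>Gm. g * c g)" using Gm(3) unfolding right_combs_def by blast
  then obtain c where c: "\<And>k. e k = (\<Sum>g\<in>Gm. g * c k g)" by metis
  have "e = (\<lambda>k. \<Sum>g\<in>Gm. sps_mult \<sigma> \<delta> (sps_const g) (\<lambda>k. c k g) k)"
    by (simp add: sps_mult_const_left c fun_eq_iff)
  then have "act a (act (sps_const r) w) = (\<Sum>g\<in>Gm. act (sps_const g) (act (\<lambda>k. c k g) w))"
    by (simp add: e_def act_mult[symmetric] act_sum_series[OF Gm(1)])
  also have "\<dots> \<in> M.max_ideal_scale W"
    using Gm(2) stable[OF scale_add.hyps(2)]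
    by (intro M.max_ideal_scale_sum M.max_ideal_scale_single) auto
  finally show ?case
    using scale_add.IH by (simp add: act_right_distrib M.max_ideal_scale_add)
qed

text \<open>\<open>W/mW\<close> is finite, so \<open>Y\<^sup>K (1 - Y\<^sup>p) W \<subseteq> mW\<close> for some \<open>K\<close> and \<open>p > 0\<close>; as
  \<open>1 - Y\<^sup>p\<close> is a unit of \<open>A\<close> and \<open>mW\<close> is \<open>A\<close>-stable, even \<open>Y\<^sup>K W \<subseteq> mW\<close>.\<close>

lemma Y_pow_into_max_ideal_scale:
  assumes stable: "\<And>b w. w \<in> W \<Longrightarrow> act b w \<in> W" and G: "finite G" "W = M.span G"
  shows "\<exists>K. \<forall>w\<in>W. act (sps_Y_pow K) w \<in> M.max_ideal_scale W"
proof -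
  let ?U = "M.max_ideal_scale W"
  note U = M.is_submodule_max_ideal_scale[OF local_ring, of W]
  obtain E0 where E0: "finite E0" "\<And>r::'r. \<exists>e\<in>E0. r - e \<in> max_ideal"
    using finite_residue_representatives[OF compact_UNIV noetherian local_ring] by blast
  obtain E where E: "finite E" "E \<subseteq> W" "\<And>w. w \<in> W \<Longrightarrow> \<exists>e\<in>E. w - e \<in> ?U"
    using M.finite_representatives_mod_max_ideal_scale[OF E0 G(1), folded G(2)] by blast
  have "\<exists>K p. 0 < p \<and> (\<forall>w\<in>W. (act_Y ^^ (K + p)) w - (act_Y ^^ K) w \<in> ?U)"
  proof (rule funpow_eventually_periodic_modulo[OF _ _ _ _ _ E])
    show "0 \<in> ?U" by (rule M.submodule_zero[OF U])
    show "x - y \<in> ?U" if "x \<in> ?U" "y \<in> ?U" for x y using M.submodule_diff[OF U that] .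
    show "act_Y (x - y) = act_Y x - act_Y y" for x y unfolding act_Y_def by (rule act_diff_right)
    show "act_Y x \<in> ?U" if "x \<in> ?U" for x
      unfolding act_Y_def using act_max_ideal_scale[OF stable that] .
    show "act_Y w \<in> W" if "w \<in> W" for w unfolding act_Y_def using stable[OF that] .
  qed
  then obtain K p where p: "0 < p" "\<And>w. w \<in> W \<Longrightarrow> (act_Y ^^ (K + p)) w - (act_Y ^^ K) w \<in> ?U"
    by blast
  have "act (sps_Y_pow K) w \<in> ?U" if "w \<in> W" for w
  proof -
    define v where "v = (act_Y ^^ K) w"
    have "(act_Y ^^ (K + p)) w = (act_Y ^^ p) v"
      unfolding v_def by (simp only: add.commute[of K p] funpow_add comp_def)
    then have "act (sps_one_minus_Y_pow p) v = - ((act_Y ^^ (K + p)) w - (act_Y ^^ K) w)"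
      by (simp add: act_one_minus_Y_pow v_def)
    then have "act (sps_one_minus_Y_pow p) v \<in> ?U"
      using M.submodule_minus[OF U p(2)[OF that]] by (simp only:)
    from act_max_ideal_scale[OF stable this]
    have "act (sps_geometric p) (act (sps_one_minus_Y_pow p) v) \<in> ?U" .
    then have "v \<in> ?U"
      by (simp add: sps_geometric_mult_one_minus_Y_pow[OF p(1)] flip: act_mult)
    then show ?thesis by (simp only: act_Y_pow v_def)
  qed
  then show ?thesis by blast
qed

end

context skew_module
begin

lemma span_eq_UNIV_if_fin_gen:
  assumes "fin_gen is_const_sps act"
  shows "\<exists>S. finite S \<and> M.span S = UNIV"
proof -
  obtain S where S: "finite S" "\<forall>x. \<exists>c. (\<forall>s\<in>S. is_const_sps (c s)) \<and> x = (\<Sum>s\<in>S. act (c s) s)"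
    using assms unfolding fin_gen_def by blast
  have "x \<in> M.span S" for x
  proof -
    obtain c where c: "\<forall>s\<in>S. is_const_sps (c s)" "x = (\<Sum>s\<in>S. act (c s) s)" using S(2) by blast
    have "\<forall>s\<in>S. \<exists>r. c s = sps_const r" using c(1) unfolding is_const_sps_def by blast
    from bchoice[OF this] obtain r where r: "\<forall>s\<in>S. c s = sps_const (r s)" ..
    have "x = (\<Sum>s\<in>S. act (sps_const (r s)) s)" unfolding c(2) using r by (intro sum.cong) auto
    then show ?thesis unfolding M.span_def by blast
  qed
  then show ?thesis using S(1) by blast
qed

lemma is_submodule_orbit: "M.is_submodule (range (\<lambda>b. act b x))"
  unfolding M.is_submodule_def
proof (intro conjI ballI allI)
  show "0 \<in> range (\<lambda>b. act b x)" by (rule range_eqI[of _ _ "\<lambda>_. 0"]) simp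
next
  fix y z assume "y \<in> range (\<lambda>b. act b x)" "z \<in> range (\<lambda>b. act b x)"
  then obtain b c where "y = act b x" "z = act c x" by blast
  then show "y + z \<in> range (\<lambda>b. act b x)" by (intro range_eqI[of _ _ "sps_add b c"]) (simp add: act_add)
next
  fix r y assume "y \<in> range (\<lambda>b. act b x)"
  then obtain b where "y = act b x" by blast
  then show "act (sps_const r) y \<in> range (\<lambda>b. act b x)"
    by (intro range_eqI[of _ _ "sps_mult \<sigma> \<delta> (sps_const r) b"]) (simp add: act_mult)
qed

lemma act_orbit:
  assumes "w \<in> range (\<lambda>b. act b x)"
  shows "act a w \<in> range (\<lambda>b. act b x)"
proof -
  obtain b where "w = act b x" using assms by blast
  then show ?thesis by (intro range_eqI[of _ _ "sps_mult \<sigma> \<delta> a b"]) (simp add: act_mult)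
qed

theorem skew_poly_submodule_is_submodule:
  assumes fg: "fin_gen is_const_sps act" and N: "submodule is_skew_poly act N"
  shows "submodule (\<lambda>_. True) act N"
proof -
  have N_poly: "\<And>b y. is_skew_poly b \<Longrightarrow> y \<in> N \<Longrightarrow> act b y \<in> N"
    using N unfolding submodule_def by blast
  have N_sub: "M.is_submodule N"
    using N is_skew_poly_const unfolding submodule_def M.is_submodule_def by blast
  obtain S where S: "finite S" "M.span S = UNIV" using span_eq_UNIV_if_fin_gen[OF fg] by blast
  have "act a x \<in> N" if "x \<in> N" for a x
  proof -
    define W where "W = range (\<lambda>b. act b x)"
    have W: "M.is_submodule W" and stable: "\<And>b w. w \<in> W \<Longrightarrow> act b w \<in> W"
      unfolding W_def by (rule is_submodule_orbit, rule act_orbit)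
    have "x \<in> W" unfolding W_def by (rule range_eqI[of _ _ sps_one]) simp
    obtain G where G: "finite G" "W = M.span G"
      using M.noetherian_submodule_finitely_generated[OF noetherian S(1) W] S(2) by auto
    obtain K where K: "\<forall>w\<in>W. act (sps_Y_pow K) w \<in> M.max_ideal_scale W"
      using Y_pow_into_max_ideal_scale[OF stable G] by blast
    have "M.span G \<subseteq> (N \<inter> W) + M.max_ideal_scale (M.span G)"
    proof
      fix y assume "y \<in> M.span G"
      then obtain b where y: "y = act b x" unfolding G(2)[symmetric] W_def by blast
      have "y = act (sps_trunc K b) x + act (sps_shift K b) (act (sps_Y_pow K) x)"
        unfolding y by (subst sps_trunc_shift[of b K]) (simp add: act_add act_mult)
      moreover have "act (sps_trunc K b) x \<in> N \<inter> W"
        using N_poly[OF is_skew_poly_trunc \<open>x \<in> N\<close>] stable[OF \<open>x \<in> W\<close>] by blast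
      moreover have "act (sps_shift K b) (act (sps_Y_pow K) x) \<in> M.max_ideal_scale (M.span G)"
        using act_max_ideal_scale[OF stable K[rule_format, OF \<open>x \<in> W\<close>]] G(2) by simp
      ultimately show "y \<in> (N \<inter> W) + M.max_ideal_scale (M.span G)" by auto
    qed
    then have "W \<subseteq> N \<inter> W"
      unfolding G(2) by (rule M.nakayama[OF local_ring G(1) M.is_submodule_Int[OF N_sub W[unfolded G(2)]]])
    then show "act a x \<in> N" using stable[OF \<open>x \<in> W\<close>] by blast
  qed
  then show ?thesis using N unfolding submodule_def by blast
qed

end

lemma submodule_kernel:
  fixes actQ :: "'r::{ring_1, topological_space} sps \<Rightarrow> 'q::ab_group_add \<Rightarrow> 'q"
    and f :: "'m::ab_group_add \<Rightarrow> 'q"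
  assumes Q: "sps_module \<sigma> \<delta> is_skew_poly actQ" and f: "\<And>x y. f (x + y) = f x + f y"
    and f_act: "\<And>b x. is_skew_poly b \<Longrightarrow> f (act b x) = actQ b (f x)"
  shows "submodule is_skew_poly act {x. f x = 0}"
proof -
  have "f 0 = 0" using f[of 0 0] by simp
  then show ?thesis
    using f f_act sps_module_act_zero[OF Q] unfolding submodule_def by simp
qed

lemma sps_module_quotient:
  fixes act :: "'r::{ring_1, topological_space} sps \<Rightarrow> 'm::ab_group_add \<Rightarrow> 'm"
    and f :: "'m \<Rightarrow> 'q::ab_group_add"
  assumes module: "sps_module \<sigma> \<delta> (\<lambda>_. True) act"
    and f: "surj f" "\<And>x y. f (x + y) = f x + f y"
    and f_act: "\<And>b x. is_skew_poly b \<Longrightarrow> f (act b x) = actQ b (f x)"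
    and kernel: "submodule (\<lambda>_. True) act {x. f x = 0}"
  shows "\<exists>actA. sps_module \<sigma> \<delta> (\<lambda>_. True) actA \<and> (\<forall>b. is_skew_poly b \<longrightarrow> actA b = actQ b) \<and>
    (\<forall>a x. f (act a x) = actA a (f x))"
proof -
  have f_diff: "f (x - y) = f x - f y" for x y
    using f(2)[of "x - y" y] by (simp add: eq_diff_eq)
  have act_add: "act a (x + y) = act a x + act a y" for a x y
    using module unfolding sps_module_def by blast
  have act_diff: "act a (x - y) = act a x - act a y" for a x y
    using act_add[of a "x - y" y] by (simp add: eq_diff_eq)
  have well_defined: "f (act a x) = f (act a y)" if "f x = f y" for a x y
  proof -
    have "f (act a (x - y)) = 0" using kernel that f_diff unfolding submodule_def by simp
    then show ?thesis by (simp add: act_diff f_diff)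
  qed
  define actA where "actA a q = f (act a (SOME x. f x = q))" for a q
  have actA: "actA a (f x) = f (act a x)" for a x
    unfolding actA_def by (rule well_defined) (rule someI[of _ x], rule refl)
  have preimage: "\<exists>x. q = f x" for q using f(1) by (metis surjD)
  have "sps_module \<sigma> \<delta> (\<lambda>_. True) actA"
    unfolding sps_module_def
  proof (intro conjI allI impI)
    fix a b :: "'r sps" and q q' :: 'q
    obtain x y where q: "q = f x" "q' = f y" using preimage by blast
    show "actA (sps_add a b) q = actA a q + actA b q"
      using module unfolding q actA sps_module_def by (simp add: f(2))
    show "actA a (q + q') = actA a q + actA a q'"
      using module unfolding q f(2)[symmetric] actA sps_module_def by (simp add: f(2))
    show "actA sps_one q = q"
      using module unfolding q actA sps_module_def by simp
    show "actA (sps_mult \<sigma> \<delta> a b) q = actA a (actA b q)"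
      using module unfolding q actA sps_module_def by simp
  qed
  moreover have "actA b = actQ b" if "is_skew_poly b" for b
  proof
    fix q
    obtain x where "q = f x" using preimage by blast
    then show "actA b q = actQ b q" using f_act that by (simp add: actA)
  qed
  ultimately have "sps_module \<sigma> \<delta> (\<lambda>_. True) actA \<and> (\<forall>b. is_skew_poly b \<longrightarrow> actA b = actQ b) \<and>
      (\<forall>a x. f (act a x) = actA a (f x))"
    by (simp add: actA)
  then show ?thesis by (rule exI[of _ actA])
qed

theorem mainTheorem11:
  fixes \<sigma> \<delta> :: "'r::{ring_1, topological_ab_group_add, topological_semigroup_mult, t2_space} \<Rightarrow> 'r"
    and act :: "'r sps \<Rightarrow> 'm::ab_group_add \<Rightarrow> 'm"
  assumes compactR: "compact (UNIV :: 'r set)"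
    and noethR: "noetherian_ring TYPE('r)"
    and localR: "local_ring TYPE('r)"
    and sigma_aut: "ring_automorphism \<sigma>"
    and sigma_m: "\<sigma> ` max_ideal = max_ideal"
    and delta_der: "sigma_derivation \<sigma> \<delta>"
    and delta_R: "range \<delta> \<subseteq> max_ideal"
    and delta_m: "\<delta> ` max_ideal \<subseteq> ideal_sq max_ideal"
    and M_A_mod: "sps_module \<sigma> \<delta> (\<lambda>_. True) act"
    and M_fg_A: "fin_gen (\<lambda>_. True) act"
    and M_fg_R: "fin_gen is_const_sps act"
  shows "(\<forall>N. submodule is_skew_poly act N \<longrightarrow> submodule (\<lambda>_. True) act N) \<and>
    (\<forall>(actQ :: 'r sps \<Rightarrow> 'q::ab_group_add \<Rightarrow> 'q) (f :: 'm \<Rightarrow> 'q).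
       sps_module \<sigma> \<delta> is_skew_poly actQ \<and> surj f \<and> (\<forall>x y. f (x + y) = f x + f y) \<and>
       (\<forall>b x. is_skew_poly b \<longrightarrow> f (act b x) = actQ b (f x))
       \<longrightarrow> (\<exists>actA :: 'r sps \<Rightarrow> 'q \<Rightarrow> 'q.
              sps_module \<sigma> \<delta> (\<lambda>_. True) actA \<and>
              (\<forall>b. is_skew_poly b \<longrightarrow> actA b = actQ b) \<and>
              (\<forall>a x. f (act a x) = actA a (f x))))"
proof -
  interpret skew_module \<sigma> \<delta> act
    by unfold_locales (fact sigma_aut delta_der localR sigma_m delta_R delta_m compactR noethR M_A_mod)+
  have submodules: "\<forall>N. submodule is_skew_poly act N \<longrightarrow> submodule (\<lambda>_. True) act N"
    using skew_poly_submodule_is_submodule[OF M_fg_R] by blast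
  moreover have "\<exists>actA. sps_module \<sigma> \<delta> (\<lambda>_. True) actA \<and> (\<forall>b. is_skew_poly b \<longrightarrow> actA b = actQ b)
      \<and> (\<forall>a x. f (act a x) = actA a (f x))"
    if Q: "sps_module \<sigma> \<delta> is_skew_poly actQ" and f: "surj f" "\<forall>x y. f (x + y) = f x + f y"
      and f_act: "\<forall>b x. is_skew_poly b \<longrightarrow> f (act b x) = actQ b (f x)"
    for actQ :: "'r sps \<Rightarrow> 'q::ab_group_add \<Rightarrow> 'q" and f :: "'m \<Rightarrow> 'q"
  proof -
    have "submodule (\<lambda>_. True) act {x. f x = 0}"
      using submodules submodule_kernel[where f = f, OF Q f(2)[rule_format] f_act[rule_format]]
      by blast
    from sps_module_quotient[where f = f, OF M_A_mod f(1) f(2)[rule_format] f_act[rule_format] this]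
    show ?thesis .
  qed
  ultimately show ?thesis by blast
qed

end
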